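(* Under the standing assumptions below, suppose $\{\pi_i\}_{i\in\mathbb{N}_0}$ is a family of exceptional Gegenbauer polynomials with weight $W^{(\alpha)}_\tau$. Let $m\in\mathbb{N}_0$ and $t\in\mathbb{R}$ with $1+t\nu_m>0$, where $\nu_m=\int_{-1}^1\pi_m^2W^{(\alpha)}_\tau\,dz$. Then $\{\pi_{m;i}(\cdot,t)\}_{i\in\mathbb{N}_0}$ is a family of exceptional Gegenbauer polynomials with weight $W^{(\alpha)}_{\tau_m}$.
   Context: For a nonzero function $\tau$ and $\alpha\in\mathbb{R}$, $W^{(\alpha)}_\tau=(1-z^2)^{\alpha-1/2}\tau^{-2}$ and $T^{(\alpha)}_\tau=(1-z^2)\left(D_z^2-2\frac{\tau_z}{\tau}D_z+\frac{\tau_{zz}}{\tau}\right)-(2\alpha+1)zD_z+(2\alpha-1)z\frac{\tau_z}{\tau}$. $T^{(\alpha)}_\tau$ is an exceptional Gegenbauer operator if it has polynomial eigenfunctions $\{\pi_i\}_{i\in\mathbb{N}_0}$ of pairwise distinct degrees, with only finitely many nonnegative integers missing from $\{\deg\pi_i\}$. $\{\pi_i\}$ is a family of exceptional Gegenbauer polynomials with weight $W^{(\alpha)}_\tau$ if (a) $\tau$ has no zeros on $I=[-1,1]$; (b) the $\pi_i$ are the eigenpolynomials of an exceptional Gegenbauer operator $T^{(\alpha)}_\tau$; (c) $\{\pi_i\}$ is complete in $L^2(I,W^{(\alpha)}_\tau(z)dz)$. Standing assumptions: $\alpha\in\mathbb{N}_0+\frac12$; $\tau$ polynomial, $T^{(\alpha)}_\tau\pi_i=\lambda_i\pi_i$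 with the $\lambda_i$ pairwise distinct; $\rho_{ij}(z)=\int_{-1}^z\pi_i\pi_jW^{(\alpha)}_\tau\,du$; $\tau_m(z,t)=\tau(z)(1+t\rho_{mm}(z))$; $\pi_{m;i}(z,t)=(1+t\rho_{mm})\pi_i-t\rho_{im}\pi_m$; and it is assumed that all $\rho_{ij}$ are rational functions of $z$ and all $\tau_m,\pi_{m;i}$ are polynomials in $z$. *)

theory Defs
  imports "HOL-Analysis.Analysis" "HOL-Computational_Algebra.Polynomial"
begin

definition xW :: "real \<Rightarrow> real poly \<Rightarrow> real \<Rightarrow> real" where
  "xW \<alpha> \<tau> z = (1 - z\<^sup>2) powr (\<alpha> - 1/2) / (poly \<tau> z)\<^sup>2"

definition xT :: "real \<Rightarrow> real poly \<Rightarrow> real poly \<Rightarrow> real \<Rightarrow> real" where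
  "xT \<alpha> \<tau> p z =
     (1 - z\<^sup>2) * (poly (pderiv (pderiv p)) z
                   - 2 * (poly (pderiv \<tau>) z / poly \<tau> z) * poly (pderiv p) z
                   + (poly (pderiv (pderiv \<tau>)) z / poly \<tau> z) * poly p z)
     - (2 * \<alpha> + 1) * z * poly (pderiv p) z
     + (2 * \<alpha> - 1) * z * (poly (pderiv \<tau>) z / poly \<tau> z) * poly p z"

text \<open>p is an eigenpolynomial of T with eigenvalue lam (identity of rational functions,
  i.e. at every point where tau does not vanish).\<close>
definition xEigen :: "real \<Rightarrow> real poly \<Rightarrow> real poly \<Rightarrow> real \<Rightarrow> bool" where
  "xEigen \<alpha> \<tau> p lam \<longleftrightarrow> p \<noteq> 0 \<and> (\<forall>z. poly \<tau> z \<noteq> 0 \<longrightarrow> xT \<alpha> \<tau> p z = lam * poly p z)"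

definition xGegOperatorEigenfamily :: "real \<Rightarrow> real poly \<Rightarrow> (nat \<Rightarrow> real poly) \<Rightarrow> bool" where
  "xGegOperatorEigenfamily \<alpha> \<tau> \<pi> \<longleftrightarrow>
     (\<forall>i. \<exists>lam. xEigen \<alpha> \<tau> (\<pi> i) lam) \<and>
     inj (\<lambda>i. degree (\<pi> i)) \<and>
     finite (UNIV - range (\<lambda>i. degree (\<pi> i)))"

definition xL2 :: "(real \<Rightarrow> real) \<Rightarrow> (real \<Rightarrow> real) \<Rightarrow> bool" where
  "xL2 W f \<longleftrightarrow> f \<in> borel_measurable lborel \<and>
     (\<integral>\<^sup>+ z. indicator {-1..1} z * ennreal ((f z)\<^sup>2 * W z) \<partial>lborel) < \<infinity>"

definition xComplete :: "(real \<Rightarrow> real) \<Rightarrow> (nat \<Rightarrow> real poly) \<Rightarrow> bool" where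
  "xComplete W \<pi> \<longleftrightarrow>
     (\<forall>f. xL2 W f \<longrightarrow> (\<forall>\<epsilon>>0. \<exists>S c. finite S \<and>
        (\<integral>\<^sup>+ z. indicator {-1..1} z *
            ennreal ((f z - (\<Sum>i\<in>S. c i * poly (\<pi> i) z))\<^sup>2 * W z) \<partial>lborel) < ennreal \<epsilon>))"

definition xGegFamily :: "real \<Rightarrow> real poly \<Rightarrow> (nat \<Rightarrow> real poly) \<Rightarrow> bool" where
  "xGegFamily \<alpha> \<tau> \<pi> \<longleftrightarrow>
     (\<forall>z\<in>{-1..1}. poly \<tau> z \<noteq> 0) \<and>
     xGegOperatorEigenfamily \<alpha> \<tau> \<pi> \<and>
     xComplete (xW \<alpha> \<tau>) \<pi>"

definition xrho :: "real \<Rightarrow> real poly \<Rightarrow> (nat \<Rightarrow> real poly) \<Rightarrow> nat \<Rightarrow> nat \<Rightarrow> real \<Rightarrow> real" where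
  "xrho \<alpha> \<tau> \<pi> i j z =
     (LBINT u=ereal (-1)..ereal z. poly (\<pi> i) u * poly (\<pi> j) u * xW \<alpha> \<tau> u)"

definition xnu :: "real \<Rightarrow> real poly \<Rightarrow> (nat \<Rightarrow> real poly) \<Rightarrow> nat \<Rightarrow> real" where
  "xnu \<alpha> \<tau> \<pi> m = (LBINT u=ereal (-1)..ereal 1. (poly (\<pi> m) u)\<^sup>2 * xW \<alpha> \<tau> u)"

end

theory Submission
  imports Defs
begin

text \<open>Write \<open>\<alpha> = n + 1/2\<close>; on \<open>(-1,1)\<close> the weight is \<open>W = (1-z\<^sup>2)\<^sup>n/\<tau>\<^sup>2\<close>, so every \<open>\<rho>\<^sub>i\<^sub>j\<close> is
  the indefinite integral of a continuous function. Put \<open>h = 1 + t \<rho>\<^sub>m\<^sub>m\<close>; it increases or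
  decreases monotonically from \<open>1\<close> to \<open>1 + t \<nu>\<^sub>m\<close>, hence is bounded away from \<open>0\<close> and \<open>\<infinity>\<close>
  on \<open>[-1,1]\<close>, so \<open>\<tau>\<^sub>m = \<tau> h\<close> has no zeros there and \<open>W\<^sub>\<tau>\<^sub>m = W / h\<^sup>2\<close> is comparable to \<open>W\<close>.

  Abel's identity \<open>(\<lambda>\<^sub>i - \<lambda>\<^sub>m) \<rho>\<^sub>i\<^sub>m = (1-z\<^sup>2) W (\<pi>\<^sub>i' \<pi>\<^sub>m - \<pi>\<^sub>i \<pi>\<^sub>m')\<close> eliminates the integral
  from \<open>\<pi>\<^sub>m\<^sub>;\<^sub>i\<close>, and \<open>T\<^sub>\<tau>\<^sub>m \<pi>\<^sub>m\<^sub>;\<^sub>i = \<lambda>\<^sub>i \<pi>\<^sub>m\<^sub>;\<^sub>i\<close> becomes a polynomial identity in the values of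
  \<open>\<tau>, \<pi>\<^sub>i, \<pi>\<^sub>m\<close> and their derivatives. Comparing leading coefficients, an eigenpolynomial \<open>p\<close> of
  \<open>T\<^sub>\<tau>\<close> has eigenvalue \<open>-k (k + 2\<alpha>)\<close> with \<open>k = deg p - deg \<tau>\<close>; so distinct eigenvalues give
  distinct degrees, and for large degrees the eigenvalue determines the degree, which transfers
  cofiniteness of the degrees from the \<open>\<pi>\<^sub>i\<close> to the \<open>\<pi>\<^sub>m\<^sub>;\<^sub>i\<close>.

  For completeness, \<open>e \<mapsto> h e - t \<pi>\<^sub>m \<integral>\<^sub>-\<^sub>1\<^sup>z e \<pi>\<^sub>m W\<close> maps \<open>\<pi>\<^sub>i\<close> to \<open>\<pi>\<^sub>m\<^sub>;\<^sub>i\<close>, is onto the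
  continuous functions, and is bounded from \<open>L\<^sup>2(W)\<close> to \<open>L\<^sup>2(W/h\<^sup>2)\<close>. Approximating \<open>f\<close> by a
  polynomial in \<open>L\<^sup>2(W)\<close> and its preimage by combinations of the \<open>\<pi>\<^sub>i\<close> gives the density of
  the \<open>\<pi>\<^sub>m\<^sub>;\<^sub>i\<close>.\<close>

section \<open>Polynomial eigenfunctions and their eigenvalues\<close>

lemma poly_eq_0_if_vanishes_on_infinite:
  fixes Q :: "'a::idom poly"
  assumes "infinite S" "\<And>z. z \<in> S \<Longrightarrow> poly Q z = 0"
  shows "Q = 0"
proof (rule ccontr)
  assume "Q \<noteq> 0"
  then have "finite {x. poly Q x = 0}" by (rule poly_roots_finite)
  moreover have "S \<subseteq> {x. poly Q x = 0}" using assms(2) by auto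
  ultimately show False using assms(1) finite_subset by blast
qed

lemma poly_eq_0_if_vanishes_on_Ioo:
  fixes Q :: "real poly"
  assumes "\<And>z. z \<in> {-1<..<1} \<Longrightarrow> poly Q z = 0"
  shows "Q = 0"
  by (rule poly_eq_0_if_vanishes_on_infinite[of "{-1<..<1}"]) (simp_all add: assms)

lemma poly_pderiv_eq_derivative:
  fixes Q :: "real poly"
  assumes "open S" "z \<in> S" "\<And>x. x \<in> S \<Longrightarrow> poly Q x = f x" "(f has_real_derivative D) (at z)"
  shows "poly (pderiv Q) z = D"
proof -
  have "(f has_real_derivative poly (pderiv Q) z) (at z)"
    by (rule has_field_derivative_transform_within_open[OF poly_DERIV assms(1,2)]) (use assms(3) in auto)
  then show ?thesis using assms(4) DERIV_unique by blast
qed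

lemma coeff_mult_at_degree_bounds:
  fixes p q :: "'a::comm_semiring_1 poly"
  assumes "degree p \<le> a" "degree q \<le> b"
  shows "coeff (p * q) (a + b) = coeff p a * coeff q b"
proof -
  have "coeff (p * q) (a + b) = (\<Sum>i\<le>a+b. coeff p i * coeff q (a + b - i))" by (rule coeff_mult)
  also have "\<dots> = (\<Sum>i\<in>{a}. coeff p i * coeff q (a + b - i))"
  proof (rule sum.mono_neutral_right)
    show "\<forall>i\<in>{..a + b} - {a}. coeff p i * coeff q (a + b - i) = 0"
    proof
      fix i assume "i \<in> {..a + b} - {a}"
      then consider "i < a" | "i > a" by fastforce
      then show "coeff p i * coeff q (a + b - i) = 0"
        by cases (use assms in \<open>auto simp: coeff_eq_0\<close>)
    qed
  qed auto
  finally show ?thesis by simp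
qed

lemma x_pderiv_degree_coeff:
  fixes q :: "real poly"
  assumes "degree q \<le> k"
  shows "degree ([:0,1:] * pderiv q) \<le> k" "coeff ([:0,1:] * pderiv q) k = real k * coeff q k"
proof -
  have x: "[:0,1:] * pderiv q = pCons 0 (pderiv q)" by (simp add: pCons_eq_iff)
  show "degree ([:0,1:] * pderiv q) \<le> k"
  proof (cases "degree q = 0")
    case True then have "pderiv q = 0" by (simp add: pderiv_eq_0_iff)
    then show ?thesis by simp
  next
    case False
    then have "degree (pCons 0 (pderiv q)) \<le> Suc (degree q - 1)"
      using degree_pCons_le[of 0 "pderiv q"] by (simp add: degree_pderiv)
    then show ?thesis using x False assms by simp
  qed
  show "coeff ([:0,1:] * pderiv q) k = real k * coeff q k"
    unfolding x by (cases k) (auto simp: coeff_pderiv)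
qed

lemma x2_pderiv2_degree_coeff:
  fixes q :: "real poly"
  assumes "degree q \<le> k"
  shows "degree ([:0,1:] * ([:0,1:] * pderiv (pderiv q))) \<le> k"
    "coeff ([:0,1:] * ([:0,1:] * pderiv (pderiv q))) k = real k * (real k - 1) * coeff q k"
proof -
  have x2: "[:0,1:] * ([:0,1:] * pderiv (pderiv q)) = pCons 0 (pCons 0 (pderiv (pderiv q)))"
    by (simp add: pCons_eq_iff)
  show "degree ([:0,1:] * ([:0,1:] * pderiv (pderiv q))) \<le> k"
  proof (cases "degree q \<le> 1")
    case True then have "pderiv (pderiv q) = 0" by (simp add: pderiv_eq_0_iff degree_pderiv)
    then show ?thesis by simp
  next
    case False
    have "degree (pCons 0 (pCons 0 (pderiv (pderiv q)))) \<le> Suc (Suc (degree q - 1 - 1))"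
      using degree_pCons_le[of 0 "pderiv (pderiv q)"] degree_pCons_le[of 0 "pCons 0 (pderiv (pderiv q))"]
      by (simp add: degree_pderiv)
    then show ?thesis using x2 False assms by simp
  qed
  show "coeff ([:0,1:] * ([:0,1:] * pderiv (pderiv q))) k = real k * (real k - 1) * coeff q k"
    unfolding x2
  proof (cases k)
    case (Suc k1) then show "coeff (pCons 0 (pCons 0 (pderiv (pderiv q)))) k = real k * (real k - 1) * coeff q k"
      by (cases k1) (auto simp: coeff_pderiv algebra_simps)
  qed simp
qed

lemma coeff_x2_mult: "coeff ([:0,1:] * ([:0,1:] * (G::real poly))) (j + 2) = coeff G j"
proof -
  have "[:0,1:] * ([:0,1:] * G) = pCons 0 (pCons 0 G)" by (simp add: pCons_eq_iff)
  then show ?thesis by (simp add: numeral_2_eq_2)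
qed

text \<open>\<open>eigen_form a l z T T' T'' p p' p''\<close> is \<open>\<tau> (T\<^sub>\<tau>\<^sup>(\<^sup>a\<^sup>) p - l p)\<close> at \<open>z\<close>, written through
  the values of \<open>\<tau>, p\<close> and their first two derivatives; \<open>eigen_residual\<close> is the same expression
  as a polynomial.\<close>
definition eigen_form ::
    "real \<Rightarrow> real \<Rightarrow> real \<Rightarrow> real \<Rightarrow> real \<Rightarrow> real \<Rightarrow> real \<Rightarrow> real \<Rightarrow> real \<Rightarrow> real" where
  "eigen_form a l z T T' T'' p p' p'' =
     (1 - z\<^sup>2) * (T * p'' - 2 * T' * p' + T'' * p) - (2*a+1) * z * T * p' + (2*a-1) * z * T' * p - l * T * p"

definition eigen_residual :: "real \<Rightarrow> real poly \<Rightarrow> real poly \<Rightarrow> real \<Rightarrow> real poly" where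
  "eigen_residual a \<tau> p l =
     [:1,0,-1:] * (\<tau> * pderiv (pderiv p) - smult 2 (pderiv \<tau> * pderiv p) + pderiv (pderiv \<tau>) * p)
     - smult (2*a+1) ([:0,1:] * \<tau> * pderiv p) + smult (2*a-1) ([:0,1:] * pderiv \<tau> * p) - smult l (\<tau> * p)"

lemma poly_eigen_residual:
  "poly (eigen_residual a \<tau> p l) z =
     eigen_form a l z (poly \<tau> z) (poly (pderiv \<tau>) z) (poly (pderiv (pderiv \<tau>)) z)
       (poly p z) (poly (pderiv p) z) (poly (pderiv (pderiv p)) z)"
  by (simp add: eigen_residual_def eigen_form_def algebra_simps power2_eq_square)

lemma xT_eq_iff_eigen_residual:
  assumes "poly \<tau> z \<noteq> 0"
  shows "xT a \<tau> p z = l * poly p z \<longleftrightarrow> poly (eigen_residual a \<tau> p l) z = 0"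
proof -
  have "poly (eigen_residual a \<tau> p l) z = poly \<tau> z * (xT a \<tau> p z - l * poly p z)"
    unfolding poly_eigen_residual eigen_form_def xT_def using assms by (simp add: field_simps)
  then show ?thesis using assms by simp
qed

lemma xEigen_iff_eigen_residual:
  assumes "\<tau> \<noteq> 0"
  shows "xEigen a \<tau> p l \<longleftrightarrow> p \<noteq> 0 \<and> eigen_residual a \<tau> p l = 0"
proof
  assume eig: "xEigen a \<tau> p l"
  have "{x. poly \<tau> x \<noteq> 0} = - {x. poly \<tau> x = 0}" by auto
  then have "infinite {x. poly \<tau> x \<noteq> 0}"
    using poly_roots_finite[OF assms] infinite_UNIV_char_0[where 'a=real] finite_compl by metis
  then have "eigen_residual a \<tau> p l = 0"
    by (rule poly_eq_0_if_vanishes_on_infinite)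
       (use eig xT_eq_iff_eigen_residual in \<open>auto simp: xEigen_def\<close>)
  then show "p \<noteq> 0 \<and> eigen_residual a \<tau> p l = 0" using eig by (simp add: xEigen_def)
next
  assume "p \<noteq> 0 \<and> eigen_residual a \<tau> p l = 0"
  then show "xEigen a \<tau> p l" unfolding xEigen_def using xT_eq_iff_eigen_residual by auto
qed

lemma x2_euler_part_coeffs:
  fixes \<tau> p :: "real poly"
  assumes dp: "degree p \<le> k" and dt: "degree \<tau> \<le> d"
  defines "Y \<equiv> \<tau> * ([:0,1:] * ([:0,1:] * pderiv (pderiv p)))
      - smult 2 (([:0,1:] * pderiv \<tau>) * ([:0,1:] * pderiv p)) + ([:0,1:] * ([:0,1:] * pderiv (pderiv \<tau>))) * p"
  shows "coeff Y (d + k + 2) = 0"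
    and "coeff Y (d + k) = coeff \<tau> d * coeff p k * (real k * (real k - 1) - 2 * real d * real k + real d * (real d - 1))"
proof -
  let ?x = "[:0,1:] :: real poly"
  note x1 = x2_pderiv2_degree_coeff[OF dp] and x2 = x2_pderiv2_degree_coeff[OF dt]
    and x3 = x_pderiv_degree_coeff[OF dp] and x4 = x_pderiv_degree_coeff[OF dt]
  have "degree (\<tau> * (?x * (?x * pderiv (pderiv p)))) \<le> d + k"
    using degree_mult_le[of \<tau>] dt x1(1) by (meson add_mono order_trans)
  moreover have "degree ((?x * pderiv \<tau>) * (?x * pderiv p)) \<le> d + k"
    using degree_mult_le[of "?x * pderiv \<tau>"] x4(1) x3(1) by (meson add_mono order_trans)
  moreover have "degree ((?x * (?x * pderiv (pderiv \<tau>))) * p) \<le> d + k"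
    using degree_mult_le[of "?x * (?x * pderiv (pderiv \<tau>))"] x2(1) dp by (meson add_mono order_trans)
  ultimately have "degree Y \<le> d + k" unfolding Y_def
    by (intro degree_add_le degree_diff_le) (auto intro: order_trans[OF degree_smult_le])
  then show "coeff Y (d + k + 2) = 0" by (simp add: coeff_eq_0)
  show "coeff Y (d + k) = coeff \<tau> d * coeff p k * (real k * (real k - 1) - 2 * real d * real k + real d * (real d - 1))"
    unfolding Y_def coeff_add coeff_diff coeff_smult coeff_mult_at_degree_bounds[OF dt x1(1)]
      coeff_mult_at_degree_bounds[OF x4(1) x3(1)] coeff_mult_at_degree_bounds[OF x2(1) dp] x1(2) x2(2) x3(2) x4(2)
    by (simp add: algebra_simps)
qed

text \<open>Multiplying by \<open>z\<^sup>2\<close> turns every term of the residual into an Euler-type operator \<open>z\<^sup>j \<partial>\<^sup>j\<close>, which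
  preserves degree bounds, so the top coefficient can be read off term by term.\<close>
lemma coeff_x2_eigen_residual:
  fixes \<tau> p :: "real poly"
  assumes dp: "degree p \<le> k" and dt: "degree \<tau> \<le> d"
  shows "coeff ([:0,1:] * ([:0,1:] * eigen_residual a \<tau> p l)) (d + k + 2) =
    - coeff \<tau> d * coeff p k * ((real k - real d) * (real k - real d + 2 * a) + l)"
proof -
  let ?x = "[:0,1:] :: real poly"
  define Y where "Y = \<tau> * (?x * (?x * pderiv (pderiv p))) - smult 2 ((?x * pderiv \<tau>) * (?x * pderiv p))
     + (?x * (?x * pderiv (pderiv \<tau>))) * p"
  have expand: "?x * (?x * eigen_residual a \<tau> p l) = Y - ?x * (?x * Y)
       - smult (2*a+1) (?x * (?x * (\<tau> * (?x * pderiv p))))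
       + smult (2*a-1) (?x * (?x * ((?x * pderiv \<tau>) * p)))
       - smult l (?x * (?x * (\<tau> * p)))"
    by (rule poly_ext) (simp add: eigen_residual_def Y_def, algebra)
  have "coeff (?x * (?x * eigen_residual a \<tau> p l)) (d + k + 2) =
      coeff Y (d + k + 2) - coeff Y (d + k) - (2*a+1) * coeff (\<tau> * (?x * pderiv p)) (d + k)
      + (2*a-1) * coeff ((?x * pderiv \<tau>) * p) (d + k) - l * coeff (\<tau> * p) (d + k)"
    unfolding expand by (simp only: coeff_diff coeff_add coeff_smult coeff_x2_mult)
  then show ?thesis
    unfolding x2_euler_part_coeffs[OF dp dt, folded Y_def]
      coeff_mult_at_degree_bounds[OF dt x_pderiv_degree_coeff(1)[OF dp]]
      coeff_mult_at_degree_bounds[OF x_pderiv_degree_coeff(1)[OF dt] dp] coeff_mult_at_degree_bounds[OF dt dp]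
      x_pderiv_degree_coeff(2)[OF dp] x_pderiv_degree_coeff(2)[OF dt]
    by (simp add: algebra_simps)
qed

lemma eigenvalue_by_degree:
  fixes \<tau> p :: "real poly"
  assumes "p \<noteq> 0" "\<tau> \<noteq> 0" "eigen_residual a \<tau> p l = 0"
  shows "l = - (real (degree p) - real (degree \<tau>)) * (real (degree p) - real (degree \<tau>) + 2 * a)"
proof -
  define k where "k = real (degree p) - real (degree \<tau>)"
  have "coeff ([:0,1:] * ([:0,1:] * eigen_residual a \<tau> p l)) (degree \<tau> + degree p + 2) = 0"
    using assms(3) by simp
  then have "lead_coeff \<tau> * lead_coeff p * (k * (k + 2 * a) + l) = 0"
    unfolding coeff_x2_eigen_residual[OF order.refl order.refl] k_def
    by (simp only: mult_minus_left neg_equal_0_iff_equal)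
  then have "k * (k + 2 * a) + l = 0" using assms(1,2) by simp
  then show ?thesis unfolding k_def[symmetric] by (simp add: algebra_simps)
qed

lemma wronskian_derivative_identity:
  fixes z T T' T'' p p' p'' q q' q'' W W' a lam mu :: real
  assumes "eigen_form a lam z T T' T'' p p' p'' = 0" "eigen_form a mu z T T' T'' q q' q'' = 0"
    and "(1-z\<^sup>2)*T*W' = W*(-(2*a-1)*z*T - 2*(1-z\<^sup>2)*T')" "T \<noteq> 0"
  shows "-2*z*W*(p'*q - p*q') + (1-z\<^sup>2)*W'*(p'*q-p*q') + (1-z\<^sup>2)*W*(p''*q - p*q'') = (lam-mu)*p*q*W"
  using assms unfolding eigen_form_def by algebra

text \<open>Here \<open>h\<close> and \<open>r\<close> stand for \<open>1 + t \<rho>\<^sub>m\<^sub>m\<close> and \<open>\<rho>\<^sub>i\<^sub>m\<close>, with their derivatives written out;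
  the Wronskian identity enters as the hypothesis on \<open>r\<close>.\<close>
lemma deformed_eigen_form:
  fixes z T T' T'' p p' p'' q q' q'' W W' h h' h'' t lam mu a r :: real
  assumes "eigen_form a lam z T T' T'' p p' p'' = 0" "eigen_form a mu z T T' T'' q q' q'' = 0"
    and "(1-z\<^sup>2)*T*W' = W*(-(2*a-1)*z*T - 2*(1-z\<^sup>2)*T')"
    and "(lam-mu)*r = (1-z\<^sup>2)*W*(p'*q - p*q')"
    and "lam \<noteq> mu" "T \<noteq> 0" "1-z\<^sup>2 \<noteq> 0"
    and "h' = t*(q*q*W)" "h'' = t*(2*q*q'*W + q*q*W')"
  shows "eigen_form a lam z (T*h) (T'*h + T*h') (T''*h + 2*T'*h' + T*h'')
     (h*p - t*r*q) (h'*p + h*p' - t*(p*q*W)*q - t*r*q')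
     (h''*p + 2*h'*p' + h*p'' - t*((p'*q+p*q')*W + p*q*W')*q - 2*t*(p*q*W)*q' - t*r*q'') = 0"
  using assms(1-7) unfolding eigen_form_def assms(8,9) by algebra

lemma deformed_eigen_form_same:
  fixes z T T' T'' q q' q'' W W' h h' h'' t mu a :: real
  assumes "eigen_form a mu z T T' T'' q q' q'' = 0"
    and "(1-z\<^sup>2)*T*W' = W*(-(2*a-1)*z*T - 2*(1-z\<^sup>2)*T')"
    and "h' = t*(q*q*W)" "h'' = t*(2*q*q'*W + q*q*W')"
  shows "eigen_form a mu z (T*h) (T'*h + T*h') (T''*h + 2*T'*h' + T*h'') q q' q'' = 0"
  using assms(1,2) unfolding eigen_form_def assms(3,4) by algebra

section \<open>Calculus on an interval\<close>

lemma has_real_derivative_mult: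
  "(f has_real_derivative Df) (at x) \<Longrightarrow> (g has_real_derivative Dg) (at x) \<Longrightarrow>
    ((\<lambda>x. f x * g x) has_real_derivative Df * g x + f x * Dg) (at x)"
  using DERIV_mult[of f Df x UNIV g Dg] by (simp add: mult.commute)

lemma integral_eq_diff_of_derivative:
  fixes F f :: "real \<Rightarrow> real"
  assumes "a \<le> z" "z \<le> b" "continuous_on {a..b} F"
    and "\<And>x. x \<in> {a<..<b} \<Longrightarrow> (F has_real_derivative f x) (at x)"
  shows "integral {a..z} f = F z - F a"
proof -
  have "(f has_integral F z - F a) {a..z}"
  proof (rule fundamental_theorem_of_calculus_interior)
    show "continuous_on {a..z} F" using continuous_on_subset[OF assms(3)] assms(2) by auto
    show "(F has_vector_derivative f x) (at x)" if "x \<in> {a<..<z}" for x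
      using assms(4)[of x] assms(2) that by (auto simp: has_real_derivative_iff_has_vector_derivative)
  qed fact
  then show ?thesis by (rule integral_unique)
qed

lemma integrable_on_initial_segment:
  fixes f :: "real \<Rightarrow> real"
  assumes "continuous_on {a..b} f" "z \<le> b"
  shows "f integrable_on {a..z}"
  using assms by (intro integrable_continuous_interval continuous_on_subset[OF assms(1)]) auto

lemma abs_integral_mult_le_am_gm:
  fixes e q W :: "real \<Rightarrow> real"
  assumes ce: "continuous_on {a..b} e" and cq: "continuous_on {a..b} q" and cW: "continuous_on {a..b} W"
    and W_nonneg: "\<And>x. x \<in> {a..b} \<Longrightarrow> 0 \<le> W x" and k: "0 < k" and z: "a \<le> z" "z \<le> b"
  shows "\<bar>integral {a..z} (\<lambda>x. e x * q x * W x)\<bar>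
    \<le> (integral {a..b} (\<lambda>x. (e x)\<^sup>2 * W x) / k + k * integral {a..b} (\<lambda>x. (q x)\<^sup>2 * W x)) / 2"
proof -
  define B where "B x = ((e x)\<^sup>2 / k + k * (q x)\<^sup>2) / 2 * W x" for x
  have cB: "continuous_on {a..b} B" unfolding B_def[abs_def] using ce cq cW k by (intro continuous_intros) auto
  have B_ge: "\<bar>e x * q x * W x\<bar> \<le> B x" if x: "x \<in> {a..b}" for x
  proof -
    have "0 \<le> (\<bar>e x\<bar> - k * \<bar>q x\<bar>)\<^sup>2" by simp
    then have "2 * k * \<bar>e x * q x\<bar> \<le> (e x)\<^sup>2 + k\<^sup>2 * (q x)\<^sup>2"
      by (simp add: power2_eq_square algebra_simps abs_mult)
    then have "\<bar>e x * q x\<bar> \<le> ((e x)\<^sup>2 / k + k * (q x)\<^sup>2) / 2"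
      using k by (simp add: field_simps power2_eq_square)
    then have "\<bar>e x * q x\<bar> * W x \<le> ((e x)\<^sup>2 / k + k * (q x)\<^sup>2) / 2 * W x"
      using W_nonneg[OF x] by (rule mult_right_mono)
    then show ?thesis unfolding B_def using W_nonneg[OF x] by (simp add: abs_mult)
  qed
  have eqW: "(\<lambda>x. e x * q x * W x) integrable_on {a..z}"
    using ce cq cW z by (intro integrable_on_initial_segment[of a b]) (auto intro!: continuous_intros)
  have iB: "B integrable_on {a..b}" by (rule integrable_continuous_interval[OF cB])
  have "\<bar>integral {a..z} (\<lambda>x. e x * q x * W x)\<bar> \<le> integral {a..z} B"
    using integral_norm_bound_integral[OF eqW integrable_on_initial_segment[OF cB z(2)]] B_ge z
    by (auto simp: real_norm_def)
  also have "\<dots> \<le> integral {a..b} B"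
  proof (rule integral_subset_le[OF _ integrable_on_initial_segment[OF cB z(2)] iB])
    show "\<forall>x\<in>{a..b}. 0 \<le> B x" using B_ge by (meson abs_ge_zero order_trans)
  qed (use z in auto)
  also have "integral {a..b} B
      = integral {a..b} (\<lambda>x. 1 / (2 * k) * ((e x)\<^sup>2 * W x) + k / 2 * ((q x)\<^sup>2 * W x))"
    using k by (intro integral_cong) (simp add: B_def field_simps)
  also have "\<dots> = 1 / (2 * k) * integral {a..b} (\<lambda>x. (e x)\<^sup>2 * W x)
      + k / 2 * integral {a..b} (\<lambda>x. (q x)\<^sup>2 * W x)"
  proof -
    have "(\<lambda>x. 1 / (2 * k) * ((e x)\<^sup>2 * W x)) integrable_on {a..b}"
      "(\<lambda>x. k / 2 * ((q x)\<^sup>2 * W x)) integrable_on {a..b}"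
      using ce cq cW k by (auto intro!: integrable_continuous_interval continuous_intros)
    then show ?thesis by (simp only: integral_add integral_mult_right)
  qed
  finally show ?thesis using k by (simp add: field_simps)
qed

lemma am_gm_error_bound_lt:
  fixes E Q k t h_min \<epsilon> \<delta> M :: real
  assumes E: "0 \<le> E" "E < \<epsilon>" and k: "0 < k" "k\<^sup>2 = \<epsilon>" and "0 \<le> Q" "0 < h_min"
    and M_def: "M = t\<^sup>2 * (1 + Q)\<^sup>2 * Q / (2 * h_min\<^sup>2)" and "0 \<le> M" and \<epsilon>_def: "\<epsilon> * (2 + M) = \<delta>"
  shows "2 * E + 2 * (t * ((E / k + k * Q) / 2) / h_min)\<^sup>2 * Q < \<delta>"
proof -
  define J where "J = (E / k + k * Q) / 2"
  have "0 \<le> J" "J \<le> k * (1 + Q) / 2"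
    unfolding J_def using E k \<open>0 \<le> Q\<close> by (auto simp: field_simps power2_eq_square)
  then have "J\<^sup>2 \<le> (k * (1 + Q) / 2)\<^sup>2" by (intro power_mono)
  have "2 * (t * J / h_min)\<^sup>2 * Q = 2 * t\<^sup>2 * Q / h_min\<^sup>2 * J\<^sup>2"
    by (simp add: power_divide power_mult_distrib)
  also have "\<dots> \<le> 2 * t\<^sup>2 * Q / h_min\<^sup>2 * (k * (1 + Q) / 2)\<^sup>2"
    using \<open>J\<^sup>2 \<le> _\<close> \<open>0 \<le> Q\<close> by (intro mult_left_mono) auto
  also have "\<dots> = \<epsilon> * M"
    unfolding M_def k(2)[symmetric] using \<open>0 < h_min\<close> by (simp add: field_simps power2_eq_square)
  finally have "2 * (t * J / h_min)\<^sup>2 * Q \<le> \<epsilon> * M" .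
  moreover have "\<epsilon> * (2 + M) = 2 * \<epsilon> + \<epsilon> * M" by (simp only: distrib_left mult.commute)
  ultimately have "2 * E + 2 * (t * J / h_min)\<^sup>2 * Q < \<delta>" using E \<epsilon>_def by linarith
  then show "2 * E + 2 * (t * ((E / k + k * Q) / 2) / h_min)\<^sup>2 * Q < \<delta>" by (simp only: J_def)
qed

section \<open>The weight and weighted square norms\<close>

definition gegenbauer_weight :: "nat \<Rightarrow> real poly \<Rightarrow> real \<Rightarrow> real" where
  "gegenbauer_weight n \<tau> z = (1 - z\<^sup>2) ^ n / (poly \<tau> z)\<^sup>2"

lemma xW_eq_gegenbauer_weight:
  assumes "\<alpha> = real n + 1/2" "\<bar>z\<bar> < 1"
  shows "xW \<alpha> \<tau> z = gegenbauer_weight n \<tau> z"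
proof -
  have "1 - z\<^sup>2 > 0" using assms(2) by (simp add: abs_square_less_1)
  then show ?thesis using assms(1) by (simp add: xW_def gegenbauer_weight_def powr_realpow)
qed

lemma continuous_on_gegenbauer_weight:
  "\<forall>z\<in>S. poly \<tau> z \<noteq> 0 \<Longrightarrow> continuous_on S (gegenbauer_weight n \<tau>)"
  unfolding gegenbauer_weight_def by (intro continuous_intros) auto

lemma gegenbauer_weight_nonneg: "\<bar>z\<bar> \<le> 1 \<Longrightarrow> 0 \<le> gegenbauer_weight n \<tau> z"
  by (simp add: gegenbauer_weight_def abs_square_le_1)

lemma gegenbauer_weight_has_derivative:
  assumes "\<bar>z\<bar> < 1" "poly \<tau> z \<noteq> 0"
  shows "(gegenbauer_weight n \<tau> has_real_derivative
      gegenbauer_weight n \<tau> z * (- (2 * real n * z) / (1 - z\<^sup>2) - 2 * poly (pderiv \<tau>) z / poly \<tau> z)) (at z)"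
proof -
  have z1: "1 - z\<^sup>2 > 0" using assms(1) by (simp add: abs_square_less_1)
  have d: "(gegenbauer_weight n \<tau> has_real_derivative
      ((real n * (1 - z\<^sup>2) ^ (n - 1) * (- (2 * z))) * (poly \<tau> z)\<^sup>2
       - (1 - z\<^sup>2) ^ n * (2 * poly \<tau> z * poly (pderiv \<tau>) z)) / ((poly \<tau> z)\<^sup>2)\<^sup>2) (at z)"
    unfolding gegenbauer_weight_def[abs_def] by (auto intro!: derivative_eq_intros simp: assms(2))
  have e: "real n * (1 - z\<^sup>2) ^ (n - 1) = real n * (1 - z\<^sup>2) ^ n / (1 - z\<^sup>2)"
    using z1 by (cases n) auto
  show ?thesis
    by (rule DERIV_cong[OF d])
       (unfold e gegenbauer_weight_def, use z1 assms(2) in \<open>simp add: field_simps power2_eq_square\<close>)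
qed

lemma interval_lebesgue_integral_xW_eq_integral:
  assumes "\<alpha> = real n + 1/2" "\<forall>z\<in>{-1..1}. poly \<tau> z \<noteq> 0" "z \<in> {-1..1}"
    and cf: "continuous_on {-1..1} f"
  shows "(LBINT u=ereal (-1)..ereal z. f u * xW \<alpha> \<tau> u) = integral {-1..z} (\<lambda>u. f u * gegenbauer_weight n \<tau> u)"
proof -
  have "(LBINT u=ereal (-1)..ereal z. f u * xW \<alpha> \<tau> u)
      = (LBINT u=ereal (-1)..ereal z. f u * gegenbauer_weight n \<tau> u)"
  proof (rule interval_integral_cong)
    fix x assume "x \<in> einterval (min (ereal (-1)) (ereal z)) (max (ereal (-1)) (ereal z))"
    then have "\<bar>x\<bar> < 1" using assms(3) by (auto simp: einterval_def min_def max_def split: if_splits)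
    then show "f x * xW \<alpha> \<tau> x = f x * gegenbauer_weight n \<tau> x"
      using xW_eq_gegenbauer_weight[OF assms(1)] by simp
  qed
  also have "\<dots> = (LBINT u : {-1..z}. f u * gegenbauer_weight n \<tau> u)"
    using assms(3) by (intro interval_integral_Icc) auto
  also have "\<dots> = integral {-1..z} (\<lambda>u. f u * gegenbauer_weight n \<tau> u)"
  proof (rule set_borel_integral_eq_integral)
    have "continuous_on {-1..z} (\<lambda>u. f u * gegenbauer_weight n \<tau> u)"
      using assms(2,3)
      by (intro continuous_intros continuous_on_subset[OF cf] continuous_on_gegenbauer_weight) auto
    then show "set_integrable lborel {-1..z} (\<lambda>u. f u * gegenbauer_weight n \<tau> u)"
      by (rule borel_integrable_atLeastAtMost')
  qed
  finally show ?thesis .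
qed

lemma borel_measurable_poly [measurable]: "(\<lambda>z. poly p z :: real) \<in> borel_measurable borel"
  by (intro borel_measurable_continuous_onI continuous_intros)

lemma xW_measurable [measurable]: "xW a \<tau> \<in> borel_measurable borel"
  unfolding xW_def[abs_def] by measurable

lemma xW_nonneg: "0 \<le> xW a \<tau> z"
  unfolding xW_def by simp

definition weighted_sqnorm :: "(real \<Rightarrow> real) \<Rightarrow> (real \<Rightarrow> real) \<Rightarrow> ennreal" where
  "weighted_sqnorm V f = (\<integral>\<^sup>+ z. indicator {-1..1} z * ennreal ((f z)\<^sup>2 * V z) \<partial>lborel)"

lemma weighted_sqnorm_cong:
  "(\<And>z. z \<in> {-1..1} \<Longrightarrow> (f z)\<^sup>2 * V z = (g z)\<^sup>2 * U z) \<Longrightarrow> weighted_sqnorm V f = weighted_sqnorm U g"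
  unfolding weighted_sqnorm_def by (intro nn_integral_cong) (auto split: split_indicator)

lemma weighted_sqnorm_mono:
  assumes "\<And>z. z \<in> {-1..1} \<Longrightarrow> (f z)\<^sup>2 * V z \<le> c * ((g z)\<^sup>2 * U z)" "0 \<le> c"
    and [measurable]: "g \<in> borel_measurable borel" "U \<in> borel_measurable borel"
  shows "weighted_sqnorm V f \<le> ennreal c * weighted_sqnorm U g"
proof -
  have "weighted_sqnorm V f \<le> (\<integral>\<^sup>+ z. ennreal c * (indicator {-1..1} z * ennreal ((g z)\<^sup>2 * U z)) \<partial>lborel)"
    unfolding weighted_sqnorm_def
    using assms(1,2) by (intro nn_integral_mono) (auto split: split_indicator simp: ennreal_mult'[symmetric] intro: ennreal_leI)
  also have "\<dots> = ennreal c * weighted_sqnorm U g"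
    unfolding weighted_sqnorm_def by (rule nn_integral_cmult) measurable
  finally show ?thesis .
qed

lemma weighted_sqnorm_add_le:
  assumes [measurable]: "f \<in> borel_measurable borel" "g \<in> borel_measurable borel" "V \<in> borel_measurable borel"
    and V_nonneg: "\<And>z. 0 \<le> V z"
  shows "weighted_sqnorm V (\<lambda>z. f z + g z) \<le> 2 * weighted_sqnorm V f + 2 * weighted_sqnorm V g"
proof -
  have "weighted_sqnorm V (\<lambda>z. f z + g z) \<le> (\<integral>\<^sup>+ z. 2 * (indicator {-1..1} z * ennreal ((f z)\<^sup>2 * V z))
      + 2 * (indicator {-1..1} z * ennreal ((g z)\<^sup>2 * V z)) \<partial>lborel)"
    unfolding weighted_sqnorm_def
  proof (intro nn_integral_mono)
    fix z
    have "(f z + g z)\<^sup>2 \<le> 2 * (f z)\<^sup>2 + 2 * (g z)\<^sup>2"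
      using zero_le_power2[of "f z - g z"] by (simp add: power2_eq_square algebra_simps)
    then have "(f z + g z)\<^sup>2 * V z \<le> (2 * (f z)\<^sup>2 + 2 * (g z)\<^sup>2) * V z"
      using V_nonneg[of z] by (rule mult_right_mono)
    then have "ennreal ((f z + g z)\<^sup>2 * V z) \<le> ennreal (2 * ((f z)\<^sup>2 * V z) + 2 * ((g z)\<^sup>2 * V z))"
      by (intro ennreal_leI) (simp add: algebra_simps)
    also have "\<dots> = 2 * ennreal ((f z)\<^sup>2 * V z) + 2 * ennreal ((g z)\<^sup>2 * V z)"
      using V_nonneg[of z] by (simp add: ennreal_mult')
    finally show "indicator {-1..1} z * ennreal ((f z + g z)\<^sup>2 * V z) \<le> 2 * (indicator {-1..1} z * ennreal ((f z)\<^sup>2 * V z))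
      + 2 * (indicator {-1..1} z * ennreal ((g z)\<^sup>2 * V z))"
      by (auto split: split_indicator)
  qed
  also have "\<dots> = 2 * weighted_sqnorm V f + 2 * weighted_sqnorm V g"
    unfolding weighted_sqnorm_def by (simp add: nn_integral_add nn_integral_cmult)
  finally show ?thesis .
qed

lemma nn_integral_indicator_continuous:
  fixes G :: "real \<Rightarrow> real"
  assumes G: "continuous_on {-1..1} G" and nn: "\<And>z. z \<in> {-1..1} \<Longrightarrow> 0 \<le> G z"
  shows "(\<integral>\<^sup>+z. indicator {-1..1} z * ennreal (G z) \<partial>lborel) = ennreal (integral {-1..1} G)"
proof -
  have restrict: "(\<lambda>z. indicator {-1..1} z * G z) = (\<lambda>z. if z \<in> {-1..1} then G z else 0)"
    by (auto split: split_indicator)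
  have "(\<lambda>z. indicator {-1..1} z * G z) \<in> borel_measurable borel"
    using borel_measurable_continuous_on_indicator[OF _ G] by simp
  moreover have "\<And>z. 0 \<le> indicator {-1..1} z * G z"
    using nn by (auto split: split_indicator)
  moreover have "((\<lambda>z. indicator {-1..1} z * G z) has_integral integral {-1..1} G) UNIV"
    unfolding restrict has_integral_restrict_UNIV
    using integrable_continuous_interval[OF G] by (simp add: has_integral_integral)
  ultimately have "(\<integral>\<^sup>+z. ennreal (indicator {-1..1} z * G z) \<partial>lborel) = ennreal (integral {-1..1} G)"
    by (rule nn_integral_has_integral_lborel)
  moreover have "(\<lambda>z. indicator {-1..1} z * ennreal (G z)) = (\<lambda>z. ennreal (indicator {-1..1} z * G z))"
    by (auto split: split_indicator)
  ultimately show ?thesis by (simp only:)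
qed

lemma ennreal_less_ennrealE:
  assumes "(X::ennreal) < ennreal x"
  obtains a where "X = ennreal a" "0 \<le> a" "a < x"
proof -
  have "X \<noteq> top" using assms by auto
  then obtain a where a: "X = ennreal a" "0 \<le> a" by (cases X) auto
  then have "a < x" using assms by (simp add: ennreal_less_iff)
  then show ?thesis using that a by blast
qed

section \<open>Exceptional Gegenbauer data\<close>

locale exceptional_gegenbauer =
  fixes \<alpha> :: real and \<tau> :: "real poly" and \<pi> :: "nat \<Rightarrow> real poly" and lam :: "nat \<Rightarrow> real"
    and n :: nat
  assumes alpha: "\<alpha> = real n + 1/2"
    and eig: "\<And>i. xEigen \<alpha> \<tau> (\<pi> i) (lam i)"
    and lam_inj: "inj lam"
    and tau_nonzero: "\<forall>z\<in>{-1..1}. poly \<tau> z \<noteq> 0"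
begin

abbreviation W :: "real \<Rightarrow> real" where
  "W \<equiv> gegenbauer_weight n \<tau>"

definition rho :: "nat \<Rightarrow> nat \<Rightarrow> real \<Rightarrow> real" where
  "rho i j z = integral {-1..z} (\<lambda>u. poly (\<pi> i) u * poly (\<pi> j) u * W u)"

definition W' :: "real \<Rightarrow> real" where
  "W' z = W z * (- (2 * real n * z) / (1 - z\<^sup>2) - 2 * poly (pderiv \<tau>) z / poly \<tau> z)"

lemma tau_ne_0: "\<tau> \<noteq> 0"
  using tau_nonzero by fastforce

lemma interior_facts:
  assumes "z \<in> {-1<..<1}"
  shows "\<bar>z\<bar> < 1" "1 - z\<^sup>2 > 0" "poly \<tau> z \<noteq> 0"
  using assms tau_nonzero by (auto simp: abs_square_less_1 abs_less_iff)

lemma continuous_on_W: "continuous_on {-1..1} W"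
  using tau_nonzero by (intro continuous_on_gegenbauer_weight) auto

lemma W_nonneg: "z \<in> {-1..1} \<Longrightarrow> 0 \<le> W z"
  by (intro gegenbauer_weight_nonneg) auto

lemma W_has_derivative: "z \<in> {-1<..<1} \<Longrightarrow> (W has_real_derivative W' z) (at z)"
  unfolding W'_def using interior_facts by (intro gegenbauer_weight_has_derivative)

text \<open>Equivalently \<open>((1-z\<^sup>2) W)'\<close> is \<open>W\<close> times the coefficient of \<open>D\<^sub>z\<close> in \<open>T\<^sub>\<tau>\<^sup>(\<^sup>\<alpha>\<^sup>)\<close>:
  the operator is formally symmetric with respect to \<open>W\<close>.\<close>
lemma W'_equation:
  "z \<in> {-1<..<1} \<Longrightarrow>
    (1-z\<^sup>2) * poly \<tau> z * W' z = W z * (-(2*\<alpha>-1) * z * poly \<tau> z - 2 * (1-z\<^sup>2) * poly (pderiv \<tau>) z)"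
  using interior_facts[of z] unfolding W'_def alpha by (simp add: field_simps)

lemma continuous_on_rho_integrand:
  "continuous_on {-1..1} (\<lambda>u. poly (\<pi> i) u * poly (\<pi> j) u * W u)"
  using continuous_on_W by (intro continuous_intros)

lemma rho_has_derivative_within:
  "z \<in> {-1..1} \<Longrightarrow>
    (rho i j has_real_derivative poly (\<pi> i) z * poly (\<pi> j) z * W z) (at z within {-1..1})"
  unfolding rho_def by (rule integral_has_real_derivative[OF continuous_on_rho_integrand])

lemma rho_has_derivative:
  assumes "z \<in> {-1<..<1}"
  shows "(rho i j has_real_derivative poly (\<pi> i) z * poly (\<pi> j) z * W z) (at z)"
proof -
  have "at z within {-1..1} = at z" using assms by (intro at_within_interior) auto
  then show ?thesis using rho_has_derivative_within[of z i j] assms by auto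
qed

lemma continuous_on_rho: "continuous_on {-1..1} (rho i j)"
  using rho_has_derivative_within by (rule DERIV_continuous_on)

lemma rho_left_end [simp]: "rho i j (-1) = 0"
  unfolding rho_def by simp

lemma rho_integrand_has_derivative:
  assumes "z \<in> {-1<..<1}"
  shows "((\<lambda>z. poly (\<pi> i) z * poly (\<pi> j) z * W z) has_real_derivative
     (poly (pderiv (\<pi> i)) z * poly (\<pi> j) z + poly (\<pi> i) z * poly (pderiv (\<pi> j)) z) * W z
     + poly (\<pi> i) z * poly (\<pi> j) z * W' z) (at z)"
  by (intro has_real_derivative_mult poly_DERIV W_has_derivative[OF assms])

lemma xrho_eq_rho: "z \<in> {-1..1} \<Longrightarrow> xrho \<alpha> \<tau> \<pi> i j z = rho i j z"
  unfolding xrho_def rho_def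
  by (rule interval_lebesgue_integral_xW_eq_integral[OF alpha tau_nonzero]) (auto intro!: continuous_intros)

lemma xnu_eq_rho: "xnu \<alpha> \<tau> \<pi> m = rho m m 1"
  unfolding xnu_def rho_def
  by (subst interval_lebesgue_integral_xW_eq_integral[OF alpha tau_nonzero])
     (auto intro!: continuous_intros simp: power2_eq_square)

lemma eigen_residual_pi: "\<pi> i \<noteq> 0" "eigen_residual \<alpha> \<tau> (\<pi> i) (lam i) = 0"
  using eig[of i] xEigen_iff_eigen_residual[OF tau_ne_0] by auto

lemma eigen_form_pi:
  "eigen_form \<alpha> (lam i) z (poly \<tau> z) (poly (pderiv \<tau>) z) (poly (pderiv (pderiv \<tau>)) z)
     (poly (\<pi> i) z) (poly (pderiv (\<pi> i)) z) (poly (pderiv (pderiv (\<pi> i))) z) = 0"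
  using eigen_residual_pi(2)[of i] by (metis poly_0 poly_eigen_residual)

lemma eigenvalue_pi:
  "lam i = - (real (degree (\<pi> i)) - real (degree \<tau>)) * (real (degree (\<pi> i)) - real (degree \<tau>) + 2 * \<alpha>)"
  using eigen_residual_pi by (rule eigenvalue_by_degree[OF _ tau_ne_0])

text \<open>Abel's identity: both sides vanish at \<open>-1\<close> and have the same derivative.\<close>
lemma wronskian:
  assumes "z \<in> {-1..1}"
  shows "(lam i - lam j) * rho i j z = (1 - z\<^sup>2) * W z *
    (poly (pderiv (\<pi> i)) z * poly (\<pi> j) z - poly (\<pi> i) z * poly (pderiv (\<pi> j)) z)"
proof -
  define wr where "wr x = poly (pderiv (\<pi> i)) x * poly (\<pi> j) x - poly (\<pi> i) x * poly (pderiv (\<pi> j)) x" for x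
  define Psi where "Psi x = (1 - x\<^sup>2) * W x * wr x" for x
  have "continuous_on {-1..1} Psi"
    unfolding Psi_def wr_def using continuous_on_W by (intro continuous_intros)
  moreover have "(Psi has_real_derivative (lam i - lam j) * (poly (\<pi> i) x * poly (\<pi> j) x * W x)) (at x)"
    if x: "x \<in> {-1<..<1}" for x
  proof -
    have "(wr has_real_derivative
        (poly (pderiv (pderiv (\<pi> i))) x * poly (\<pi> j) x + poly (pderiv (\<pi> i)) x * poly (pderiv (\<pi> j)) x)
        - (poly (pderiv (\<pi> i)) x * poly (pderiv (\<pi> j)) x + poly (\<pi> i) x * poly (pderiv (pderiv (\<pi> j))) x)) (at x)"
      unfolding wr_def[abs_def] by (intro DERIV_diff has_real_derivative_mult poly_DERIV)
    then have "(Psi has_real_derivative ((- 2 * x) * W x + (1 - x\<^sup>2) * W' x) * wr x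
        + (1 - x\<^sup>2) * W x * ((poly (pderiv (pderiv (\<pi> i))) x * poly (\<pi> j) x
            + poly (pderiv (\<pi> i)) x * poly (pderiv (\<pi> j)) x)
          - (poly (pderiv (\<pi> i)) x * poly (pderiv (\<pi> j)) x
            + poly (\<pi> i) x * poly (pderiv (pderiv (\<pi> j))) x))) (at x)"
      unfolding Psi_def[abs_def]
      by (intro has_real_derivative_mult W_has_derivative[OF x]) (auto intro!: derivative_eq_intros)
    then show ?thesis
      by (rule DERIV_cong)
         (use wronskian_derivative_identity[OF eigen_form_pi eigen_form_pi W'_equation[OF x] interior_facts(3)[OF x]]
          in \<open>simp add: wr_def algebra_simps\<close>)
  qed
  ultimately have "integral {-1..z} (\<lambda>x. (lam i - lam j) * (poly (\<pi> i) x * poly (\<pi> j) x * W x)) = Psi z - Psi (-1)"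
    using assms by (intro integral_eq_diff_of_derivative) auto
  then show ?thesis by (simp add: rho_def Psi_def wr_def)
qed

lemma nn_integral_xW:
  assumes F: "continuous_on {-1..1} F" and nn: "\<And>z. z \<in> {-1..1} \<Longrightarrow> 0 \<le> F z"
  shows "(\<integral>\<^sup>+z. indicator {-1..1} z * ennreal (F z * xW \<alpha> \<tau> z) \<partial>lborel)
    = ennreal (integral {-1..1} (\<lambda>z. F z * W z))"
proof -
  have "(\<integral>\<^sup>+z. indicator {-1..1} z * ennreal (F z * xW \<alpha> \<tau> z) \<partial>lborel)
      = (\<integral>\<^sup>+z. indicator {-1..1} z * ennreal (F z * W z) \<partial>lborel)"
  proof (rule nn_integral_cong_AE)
    show "AE z in lborel. indicator {-1..1} z * ennreal (F z * xW \<alpha> \<tau> z)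
        = indicator {-1..1} z * ennreal (F z * W z)"
      using AE_lborel_singleton[of "-1::real"] AE_lborel_singleton[of "1::real"]
    proof eventually_elim
      case (elim z)
      then show ?case
        by (cases "z \<in> {-1..1}") (auto simp: xW_eq_gegenbauer_weight[OF alpha])
    qed
  qed
  also have "\<dots> = ennreal (integral {-1..1} (\<lambda>z. F z * W z))"
    using F continuous_on_W nn W_nonneg by (intro nn_integral_indicator_continuous continuous_intros) auto
  finally show ?thesis .
qed

lemma weighted_sqnorm_xW_continuous:
  "continuous_on {-1..1} f \<Longrightarrow>
    weighted_sqnorm (xW \<alpha> \<tau>) f = ennreal (integral {-1..1} (\<lambda>z. (f z)\<^sup>2 * W z))"
  unfolding weighted_sqnorm_def by (intro nn_integral_xW continuous_intros) auto

lemma xL2_extension_by_zero: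
  assumes "continuous_on {-1..1} u"
  shows "xL2 (xW \<alpha> \<tau>) (\<lambda>z. if z \<in> {-1..1} then u z else 0)"
proof -
  have "(\<lambda>z. if z \<in> {-1..1} then u z else 0) \<in> borel_measurable lborel"
    unfolding measurable_lborel2
    by (rule borel_measurable_continuous_on_if[OF _ assms continuous_on_const]) simp
  moreover have "weighted_sqnorm (xW \<alpha> \<tau>) (\<lambda>z. if z \<in> {-1..1} then u z else 0) = weighted_sqnorm (xW \<alpha> \<tau>) u"
    by (rule weighted_sqnorm_cong) simp
  ultimately show ?thesis
    using weighted_sqnorm_xW_continuous[OF assms] by (simp add: xL2_def weighted_sqnorm_def[symmetric])
qed

end

section \<open>The deformation by \<open>\<pi>\<^sub>m\<close>\<close>

locale christoffel_deformation = exceptional_gegenbauer +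
  fixes m :: nat and t :: real and \<tau>m :: "real poly" and P :: "nat \<Rightarrow> real poly"
  assumes one_plus_t_nu_pos: "1 + t * rho m m 1 > 0"
    and tau_m: "\<And>z. z \<in> {-1..1} \<Longrightarrow> poly \<tau>m z = poly \<tau> z * (1 + t * rho m m z)"
    and P_eq: "\<And>i z. z \<in> {-1..1} \<Longrightarrow>
      poly (P i) z = (1 + t * rho m m z) * poly (\<pi> i) z - t * rho i m z * poly (\<pi> m) z"
begin

definition h :: "real \<Rightarrow> real" where
  "h z = 1 + t * rho m m z"

definition h' :: "real \<Rightarrow> real" where
  "h' z = t * (poly (\<pi> m) z * poly (\<pi> m) z * W z)"

definition h'' :: "real \<Rightarrow> real" where
  "h'' z = t * (2 * poly (\<pi> m) z * poly (pderiv (\<pi> m)) z * W z + poly (\<pi> m) z * poly (\<pi> m) z * W' z)"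

definition h_min :: real where
  "h_min = min 1 (1 + t * rho m m 1)"

definition h_max :: real where
  "h_max = max 1 (1 + t * rho m m 1)"

lemma rho_mm_bounds:
  assumes "z \<in> {-1..1}"
  shows "0 \<le> rho m m z" "rho m m z \<le> rho m m 1"
proof -
  let ?f = "\<lambda>u. poly (\<pi> m) u * poly (\<pi> m) u * W u"
  have nn: "\<forall>x\<in>{-1..1}. 0 \<le> ?f x" using W_nonneg by auto
  have i1: "?f integrable_on {-1..1}"
    by (rule integrable_continuous_interval[OF continuous_on_rho_integrand])
  have i2: "?f integrable_on {-1..z}"
    by (rule integrable_on_initial_segment[OF continuous_on_rho_integrand]) (use assms in auto)
  show "0 \<le> rho m m z" unfolding rho_def by (rule integral_nonneg[OF i2]) (use nn assms in auto)
  show "rho m m z \<le> rho m m 1" unfolding rho_def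
    by (rule integral_subset_le[OF _ i2 i1 nn]) (use assms in auto)
qed

lemma h_min_pos: "h_min > 0"
  using one_plus_t_nu_pos by (simp add: h_min_def)

lemma h_bounds:
  assumes "z \<in> {-1..1}"
  shows "h_min \<le> h z" "h z \<le> h_max"
proof -
  note bounds = rho_mm_bounds[OF assms]
  show "h_min \<le> h z"
  proof (cases "t \<ge> 0")
    case False
    then have "t * rho m m 1 \<le> t * rho m m z" using bounds by (intro mult_left_mono_neg) auto
    then show ?thesis by (simp add: h_min_def h_def)
  qed (use bounds in \<open>simp add: h_min_def h_def\<close>)
  show "h z \<le> h_max"
  proof (cases "t \<ge> 0")
    case True
    then have "t * rho m m z \<le> t * rho m m 1" using bounds by (intro mult_left_mono) auto
    then show ?thesis by (simp add: h_max_def h_def)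
  next
    case False
    then have "t * rho m m z \<le> 0" using bounds by (simp add: mult_nonpos_nonneg)
    then show ?thesis by (simp add: h_max_def h_def)
  qed
qed

lemma h_pos: "z \<in> {-1..1} \<Longrightarrow> h z > 0"
  using h_bounds(1) h_min_pos by fastforce

lemma continuous_on_h: "continuous_on {-1..1} h"
  unfolding h_def[abs_def] using continuous_on_rho by (intro continuous_intros)

lemma h_has_derivative: "z \<in> {-1<..<1} \<Longrightarrow> (h has_real_derivative h' z) (at z)"
  unfolding h_def[abs_def] h'_def by (auto intro!: derivative_eq_intros rho_has_derivative)

lemma h'_has_derivative: "z \<in> {-1<..<1} \<Longrightarrow> (h' has_real_derivative h'' z) (at z)"
  unfolding h'_def[abs_def] h''_def
  by (rule DERIV_cong[OF DERIV_cmult[OF rho_integrand_has_derivative]]) (auto simp: algebra_simps)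

lemma P_eq_h: "z \<in> {-1..1} \<Longrightarrow> poly (P i) z = h z * poly (\<pi> i) z - t * rho i m z * poly (\<pi> m) z"
  using P_eq by (simp add: h_def)

lemma tau_m_eq_h: "z \<in> {-1..1} \<Longrightarrow> poly \<tau>m z = poly \<tau> z * h z"
  using tau_m by (simp add: h_def)

lemma tau_m_nonzero: "z \<in> {-1..1} \<Longrightarrow> poly \<tau>m z \<noteq> 0"
  using tau_m_eq_h h_pos tau_nonzero by fastforce

lemma tau_m_ne_0: "\<tau>m \<noteq> 0"
  using tau_m_nonzero[of 0] by auto

lemma poly_pderiv_tau_m:
  "z \<in> {-1<..<1} \<Longrightarrow> poly (pderiv \<tau>m) z = poly (pderiv \<tau>) z * h z + poly \<tau> z * h' z"
  by (rule poly_pderiv_eq_derivative[of "{-1<..<1}"])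
     (auto simp: tau_m_eq_h intro!: has_real_derivative_mult poly_DERIV h_has_derivative)

lemma poly_pderiv2_tau_m:
  "z \<in> {-1<..<1} \<Longrightarrow>
    poly (pderiv (pderiv \<tau>m)) z = poly (pderiv (pderiv \<tau>)) z * h z + 2 * poly (pderiv \<tau>) z * h' z + poly \<tau> z * h'' z"
  by (rule poly_pderiv_eq_derivative[of "{-1<..<1}"], simp, assumption, rule poly_pderiv_tau_m, assumption,
      rule DERIV_cong[OF DERIV_add[OF has_real_derivative_mult has_real_derivative_mult]])
     (auto intro: poly_DERIV h_has_derivative h'_has_derivative)

lemma poly_pderiv_P:
  assumes z: "z \<in> {-1<..<1}"
  shows "poly (pderiv (P i)) z = h' z * poly (\<pi> i) z + h z * poly (pderiv (\<pi> i)) z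
     - t * (poly (\<pi> i) z * poly (\<pi> m) z * W z) * poly (\<pi> m) z - t * rho i m z * poly (pderiv (\<pi> m)) z"
proof -
  have "poly (pderiv (P i)) z = (h' z * poly (\<pi> i) z + h z * poly (pderiv (\<pi> i)) z)
     - (t * (poly (\<pi> i) z * poly (\<pi> m) z * W z) * poly (\<pi> m) z + t * rho i m z * poly (pderiv (\<pi> m)) z)"
  proof (rule poly_pderiv_eq_derivative[of "{-1<..<1}"])
    show "poly (P i) x = h x * poly (\<pi> i) x - (t * rho i m x) * poly (\<pi> m) x" if "x \<in> {-1<..<1}" for x
      using P_eq_h[of x i] that by auto
    show "((\<lambda>x. h x * poly (\<pi> i) x - (t * rho i m x) * poly (\<pi> m) x) has_real_derivative
       (h' z * poly (\<pi> i) z + h z * poly (pderiv (\<pi> i)) z)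
       - (t * (poly (\<pi> i) z * poly (\<pi> m) z * W z) * poly (\<pi> m) z + t * rho i m z * poly (pderiv (\<pi> m)) z)) (at z)"
      by (intro DERIV_diff has_real_derivative_mult DERIV_cmult h_has_derivative poly_DERIV rho_has_derivative z)
  qed (use z in auto)
  then show ?thesis by simp
qed

lemma poly_pderiv2_P:
  assumes z: "z \<in> {-1<..<1}"
  shows "poly (pderiv (pderiv (P i))) z =
     h'' z * poly (\<pi> i) z + 2 * h' z * poly (pderiv (\<pi> i)) z + h z * poly (pderiv (pderiv (\<pi> i))) z
     - t * ((poly (pderiv (\<pi> i)) z * poly (\<pi> m) z + poly (\<pi> i) z * poly (pderiv (\<pi> m)) z) * W z
            + poly (\<pi> i) z * poly (\<pi> m) z * W' z) * poly (\<pi> m) z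
     - 2 * t * (poly (\<pi> i) z * poly (\<pi> m) z * W z) * poly (pderiv (\<pi> m)) z
     - t * rho i m z * poly (pderiv (pderiv (\<pi> m))) z"
proof -
  have "poly (pderiv (pderiv (P i))) z =
     ((h'' z * poly (\<pi> i) z + h' z * poly (pderiv (\<pi> i)) z) + (h' z * poly (pderiv (\<pi> i)) z + h z * poly (pderiv (pderiv (\<pi> i))) z))
     - ((t * ((poly (pderiv (\<pi> i)) z * poly (\<pi> m) z + poly (\<pi> i) z * poly (pderiv (\<pi> m)) z) * W z
             + poly (\<pi> i) z * poly (\<pi> m) z * W' z) * poly (\<pi> m) z
         + t * (poly (\<pi> i) z * poly (\<pi> m) z * W z) * poly (pderiv (\<pi> m)) z)
       + (t * (poly (\<pi> i) z * poly (\<pi> m) z * W z) * poly (pderiv (\<pi> m)) z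
         + t * rho i m z * poly (pderiv (pderiv (\<pi> m))) z))"
  proof (rule poly_pderiv_eq_derivative[of "{-1<..<1}"])
    show "poly (pderiv (P i)) x = (h' x * poly (\<pi> i) x + h x * poly (pderiv (\<pi> i)) x)
        - ((t * (poly (\<pi> i) x * poly (\<pi> m) x * W x)) * poly (\<pi> m) x + (t * rho i m x) * poly (pderiv (\<pi> m)) x)"
      if "x \<in> {-1<..<1}" for x
      using poly_pderiv_P[OF that, of i] by simp
    show "((\<lambda>x. (h' x * poly (\<pi> i) x + h x * poly (pderiv (\<pi> i)) x)
        - ((t * (poly (\<pi> i) x * poly (\<pi> m) x * W x)) * poly (\<pi> m) x + (t * rho i m x) * poly (pderiv (\<pi> m)) x))
      has_real_derivative
     ((h'' z * poly (\<pi> i) z + h' z * poly (pderiv (\<pi> i)) z) + (h' z * poly (pderiv (\<pi> i)) z + h z * poly (pderiv (pderiv (\<pi> i))) z))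
     - ((t * ((poly (pderiv (\<pi> i)) z * poly (\<pi> m) z + poly (\<pi> i) z * poly (pderiv (\<pi> m)) z) * W z
             + poly (\<pi> i) z * poly (\<pi> m) z * W' z) * poly (\<pi> m) z
         + t * (poly (\<pi> i) z * poly (\<pi> m) z * W z) * poly (pderiv (\<pi> m)) z)
       + (t * (poly (\<pi> i) z * poly (\<pi> m) z * W z) * poly (pderiv (\<pi> m)) z
         + t * rho i m z * poly (pderiv (pderiv (\<pi> m))) z))) (at z)"
      by (intro DERIV_diff DERIV_add has_real_derivative_mult DERIV_cmult h_has_derivative h'_has_derivative
          poly_DERIV rho_has_derivative rho_integrand_has_derivative z)
  qed (use z in auto)
  then show ?thesis by (simp add: algebra_simps)
qed


lemma P_m: "P m = \<pi> m"
proof -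
  have "P m - \<pi> m = 0"
    by (rule poly_eq_0_if_vanishes_on_Ioo) (auto simp: P_eq_h h_def algebra_simps)
  then show ?thesis by simp
qed

lemma eigen_residual_P: "eigen_residual \<alpha> \<tau>m (P i) (lam i) = 0"
proof (rule poly_eq_0_if_vanishes_on_Ioo)
  fix z :: real assume z: "z \<in> {-1<..<1}"
  then have z': "z \<in> {-1..1}" by auto
  note tau_derivs = tau_m_eq_h[OF z'] poly_pderiv_tau_m[OF z] poly_pderiv2_tau_m[OF z]
  show "poly (eigen_residual \<alpha> \<tau>m (P i) (lam i)) z = 0"
  proof (cases "i = m")
    case True
    show ?thesis unfolding True P_m poly_eigen_residual tau_derivs
      by (rule deformed_eigen_form_same[OF eigen_form_pi W'_equation[OF z] h'_def h''_def])
  next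
    case False
    then have "lam i \<noteq> lam m" using lam_inj by (meson injD)
    moreover have "1 - z\<^sup>2 \<noteq> 0" using interior_facts(2)[OF z] by simp
    ultimately show ?thesis
      unfolding poly_eigen_residual tau_derivs P_eq_h[OF z'] poly_pderiv_P[OF z] poly_pderiv2_P[OF z]
      by (rule deformed_eigen_form[OF eigen_form_pi eigen_form_pi W'_equation[OF z] wronskian[OF z']
          _ interior_facts(3)[OF z] _ h'_def h''_def])
  qed
qed

text \<open>If \<open>P i = 0\<close> then \<open>h \<pi>\<^sub>i = t \<rho>\<^sub>i\<^sub>m \<pi>\<^sub>m\<close>, which makes \<open>\<rho>\<^sub>i\<^sub>m / h\<close> constant, hence zero.\<close>
lemma P_ne_0: "P i \<noteq> 0"
proof (cases "i = m")
  case True then show ?thesis using P_m eigen_residual_pi by simp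
next
  case False
  show ?thesis
  proof
    assume P0: "P i = 0"
    define g where "g z = rho i m z / h z" for z
    have h_ne: "h z \<noteq> 0" if "z \<in> {-1..1}" for z using h_pos that by fastforce
    have pi_eq: "h z * poly (\<pi> i) z = t * rho i m z * poly (\<pi> m) z" if "z \<in> {-1..1}" for z
      using P_eq_h[OF that, of i] P0 by simp
    have "continuous_on {-1..1} g"
      unfolding g_def[abs_def] using continuous_on_h continuous_on_rho h_ne by (intro continuous_intros) auto
    moreover have "(g has_real_derivative 0) (at x)" if x: "-1 < x" "x < 1" for x
    proof -
      have x': "x \<in> {-1<..<1}" "x \<in> {-1..1}" using x by auto
      have "(g has_real_derivative
          (poly (\<pi> i) x * poly (\<pi> m) x * W x * h x - rho i m x * h' x) / (h x * h x)) (at x)"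
        unfolding g_def[abs_def] using h_ne[OF x'(2)]
        by (auto intro!: derivative_eq_intros rho_has_derivative h_has_derivative x'(1) simp: power2_eq_square)
      moreover have "poly (\<pi> i) x * poly (\<pi> m) x * W x * h x = rho i m x * h' x"
        using pi_eq[OF x'(2)] unfolding h'_def by (simp add: algebra_simps)
      ultimately show ?thesis by simp
    qed
    ultimately have g_const: "g z = g (-1)" if "z \<in> {-1..1}" for z
      using that by (intro DERIV_isconst2[of "-1" 1]) auto
    have "rho i m z = 0" if "z \<in> {-1..1}" for z
      using g_const[OF that] h_ne[OF that] by (simp add: g_def)
    then have "\<pi> i = 0"
      by (intro poly_eq_0_if_vanishes_on_Ioo) (use pi_eq h_ne in fastforce)
    then show False using eigen_residual_pi by simp
  qed
qed

lemma xEigen_P: "xEigen \<alpha> \<tau>m (P i) (lam i)"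
  using xEigen_iff_eigen_residual[OF tau_m_ne_0] eigen_residual_P P_ne_0 by auto

lemma eigenvalue_P:
  "lam i = - (real (degree (P i)) - real (degree \<tau>m)) * (real (degree (P i)) - real (degree \<tau>m) + 2 * \<alpha>)"
  by (rule eigenvalue_by_degree[OF P_ne_0 tau_m_ne_0 eigen_residual_P])

lemma inj_degree_P: "inj (\<lambda>i. degree (P i))"
proof (rule injI)
  fix i j assume "degree (P i) = degree (P j)"
  then have "lam i = lam j" using eigenvalue_P[of i] eigenvalue_P[of j] by simp
  then show "i = j" using lam_inj by (meson injD)
qed

text \<open>For large \<open>N\<close> the degree \<open>N - deg \<tau>\<^sub>m + deg \<tau>\<close> is attained by some \<open>\<pi>\<^sub>i\<close>; since
  \<open>k \<mapsto> -k (k + 2\<alpha>)\<close> is injective on \<open>k > -\<alpha>\<close>, the eigenvalue \<open>lam i\<close> forces \<open>deg (P i) = N\<close>.\<close>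
lemma cofinite_degree_P:
  assumes "finite (UNIV - range (\<lambda>i. degree (\<pi> i)))"
  shows "finite (UNIV - range (\<lambda>i. degree (P i)))"
proof -
  obtain B where B: "\<And>K. K \<notin> range (\<lambda>i. degree (\<pi> i)) \<Longrightarrow> K < B"
    using assms finite_nat_bounded by (meson Diff_iff UNIV_I lessThan_iff subsetD)
  define d where "d = degree \<tau>"
  define d' where "d' = degree \<tau>m"
  have "UNIV - range (\<lambda>i. degree (P i)) \<subseteq> {..< B + 2 * d' + 1}"
  proof
    fix N assume N: "N \<in> UNIV - range (\<lambda>i. degree (P i))"
    show "N \<in> {..< B + 2 * d' + 1}"
    proof (rule ccontr)
      assume "N \<notin> {..< B + 2 * d' + 1}"
      then have NB: "N \<ge> B + 2 * d' + 1" by simp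
      then obtain i where i: "degree (\<pi> i) = N - d' + d" using B[of "N - d' + d"] by force
      define k where "k = real N - real d'"
      define k' where "k' = real (degree (P i)) - real d'"
      have "lam i = - k * (k + 2 * \<alpha>)" using eigenvalue_pi[of i] i NB unfolding k_def d_def by simp
      moreover have "lam i = - k' * (k' + 2 * \<alpha>)" using eigenvalue_P[of i] unfolding k'_def d'_def by simp
      ultimately have "(k - k') * (k + k' + 2 * \<alpha>) = 0" by (simp add: algebra_simps)
      moreover have "k + k' + 2 * \<alpha> > 0" using NB alpha unfolding k_def k'_def by simp
      ultimately have "degree (P i) = N" unfolding k_def k'_def by simp
      then show False using N by auto
    qed
  qed
  then show ?thesis using finite_subset by blast
qed


lemma xW_tau_m: "z \<in> {-1..1} \<Longrightarrow> xW \<alpha> \<tau>m z = xW \<alpha> \<tau> z / (h z)\<^sup>2"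
  unfolding xW_def using tau_m_eq_h[of z] by (simp add: power_mult_distrib)

definition deform :: "(real \<Rightarrow> real) \<Rightarrow> real \<Rightarrow> real" where
  "deform e z = h z * e z - t * poly (\<pi> m) z * integral {-1..z} (\<lambda>s. e s * poly (\<pi> m) s * W s)"

lemma deform_diff:
  assumes "continuous_on {-1..1} u" "continuous_on {-1..1} v" "z \<in> {-1..1}"
  shows "deform (\<lambda>x. u x - v x) z = deform u z - deform v z"
proof -
  have "(\<lambda>s. u s * poly (\<pi> m) s * W s) integrable_on {-1..z}" "(\<lambda>s. v s * poly (\<pi> m) s * W s) integrable_on {-1..z}"
    using assms continuous_on_W by (auto intro!: integrable_on_initial_segment[of _ 1] continuous_intros)
  then show ?thesis by (simp add: deform_def integral_diff left_diff_distrib algebra_simps)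
qed

lemma sum_P_eq_deform:
  assumes "finite S" "z \<in> {-1..1}"
  shows "(\<Sum>i\<in>S. c i * poly (P i) z) = deform (\<lambda>x. \<Sum>i\<in>S. c i * poly (\<pi> i) x) z"
proof -
  have "(\<lambda>x. c i * (poly (\<pi> i) x * poly (\<pi> m) x * W x)) integrable_on {-1..z}" for i
    using assms(2) continuous_on_rho_integrand
    by (intro integrable_on_initial_segment[of _ 1] continuous_on_mult_left) auto
  then have "integral {-1..z} (\<lambda>x. \<Sum>i\<in>S. c i * (poly (\<pi> i) x * poly (\<pi> m) x * W x))
      = (\<Sum>i\<in>S. c i * rho i m z)"
    by (simp add: integral_sum[OF assms(1)] rho_def)
  moreover have "(\<lambda>x. (\<Sum>i\<in>S. c i * poly (\<pi> i) x) * poly (\<pi> m) x * W x)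
      = (\<lambda>x. \<Sum>i\<in>S. c i * (poly (\<pi> i) x * poly (\<pi> m) x * W x))"
    by (simp add: sum_distrib_right mult.assoc)
  moreover have "(\<Sum>i\<in>S. c i * poly (P i) z)
      = (\<Sum>i\<in>S. c i * (h z * poly (\<pi> i) z - t * rho i m z * poly (\<pi> m) z))"
    using P_eq_h[OF assms(2)] by simp
  moreover have "\<dots> = h z * (\<Sum>i\<in>S. c i * poly (\<pi> i) z) - t * poly (\<pi> m) z * (\<Sum>i\<in>S. c i * rho i m z)"
    by (simp add: right_diff_distrib sum_subtractf sum_distrib_left mult_ac)
  ultimately show ?thesis by (simp add: deform_def)
qed

text \<open>A preimage of \<open>g\<close> is \<open>u = g / h + t \<pi>\<^sub>m G\<close> with \<open>G' = g \<pi>\<^sub>m W / h\<^sup>2\<close>, \<open>G (-1) = 0\<close>: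
  then \<open>(h G)' = u \<pi>\<^sub>m W\<close>, so \<open>\<integral>\<^sub>-\<^sub>1\<^sup>z u \<pi>\<^sub>m W = h G\<close>.\<close>
lemma deform_surjective:
  assumes g: "continuous_on {-1..1} g"
  obtains u where "continuous_on {-1..1} u" "\<And>z. z \<in> {-1..1} \<Longrightarrow> deform u z = g z"
proof -
  have h_ne: "h z \<noteq> 0" if "z \<in> {-1..1}" for z using h_pos that by fastforce
  define G' where "G' s = g s * poly (\<pi> m) s * W s / (h s)\<^sup>2" for s
  have cG': "continuous_on {-1..1} G'" unfolding G'_def[abs_def]
    using g continuous_on_W continuous_on_h h_ne by (intro continuous_intros) auto
  define G where "G z = integral {-1..z} G'" for z
  have G_within: "(G has_real_derivative G' x) (at x within {-1..1})" if "x \<in> {-1..1}" for x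
    unfolding G_def[abs_def] by (rule integral_has_real_derivative[OF cG' that])
  have cG: "continuous_on {-1..1} G" using G_within by (rule DERIV_continuous_on)
  define u where "u z = g z / h z + t * poly (\<pi> m) z * G z" for z
  have cu: "continuous_on {-1..1} u" unfolding u_def[abs_def]
    using g cG continuous_on_h h_ne by (intro continuous_intros) auto
  have "deform u z = g z" if z: "z \<in> {-1..1}" for z
  proof -
    have "integral {-1..z} (\<lambda>s. u s * poly (\<pi> m) s * W s) = h z * G z - h (-1) * G (-1)"
    proof (rule integral_eq_diff_of_derivative)
      show "continuous_on {-1..1} (\<lambda>z. h z * G z)" using continuous_on_h cG by (intro continuous_intros)
      show "((\<lambda>z. h z * G z) has_real_derivative u x * poly (\<pi> m) x * W x) (at x)" if x: "x \<in> {-1<..<1}" for x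
      proof -
        have "at x within {-1..1} = at x" using x by (intro at_within_interior) auto
        then have "(G has_real_derivative G' x) (at x)" using G_within[of x] x by auto
        then have "((\<lambda>z. h z * G z) has_real_derivative h' x * G x + h x * G' x) (at x)"
          by (intro has_real_derivative_mult h_has_derivative x)
        moreover have "h' x * G x + h x * G' x = u x * poly (\<pi> m) x * W x"
          unfolding u_def h'_def G'_def using h_ne[of x] x by (simp add: field_simps power2_eq_square)
        ultimately show ?thesis by simp
      qed
    qed (use z in auto)
    then show ?thesis using h_ne[OF z] by (simp add: deform_def G_def u_def field_simps)
  qed
  with cu that show ?thesis by blast
qed

text \<open>The bound uses \<open>|\<integral> e \<pi>\<^sub>m W| \<le> (E/k + k Q) / 2\<close> for every \<open>k > 0\<close>, a form of Cauchy--Schwarz.\<close>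
lemma deform_sqnorm_le:
  assumes ce: "continuous_on {-1..1} e" and k: "0 < k"
  defines "E \<equiv> integral {-1..1} (\<lambda>z. (e z)\<^sup>2 * W z)"
    and "Q \<equiv> integral {-1..1} (\<lambda>z. (poly (\<pi> m) z)\<^sup>2 * W z)"
  shows "weighted_sqnorm (xW \<alpha> \<tau>m) (deform e) \<le> ennreal (2 * E + 2 * (t * ((E / k + k * Q) / 2) / h_min)\<^sup>2 * Q)"
proof -
  define J where "J = (E / k + k * Q) / 2"
  define F where "F z = 2 * (e z)\<^sup>2 + 2 * (t * J / h_min)\<^sup>2 * (poly (\<pi> m) z)\<^sup>2" for z
  have pointwise: "(deform e z)\<^sup>2 * xW \<alpha> \<tau>m z \<le> F z * xW \<alpha> \<tau> z" if z: "z \<in> {-1..1}" for z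
  proof -
    define I where "I = integral {-1..z} (\<lambda>x. e x * poly (\<pi> m) x * W x)"
    define X where "X = xW \<alpha> \<tau> z"
    have X: "0 \<le> X" unfolding X_def by (rule xW_nonneg)
    have H: "h_min \<le> h z" "0 < h z" using h_bounds(1)[OF z] h_min_pos by auto
    have "\<bar>I\<bar> \<le> J"
      unfolding I_def J_def E_def Q_def
      by (rule abs_integral_mult_le_am_gm[OF ce continuous_on_poly[OF continuous_on_id] continuous_on_W W_nonneg k])
         (use z in auto)
    then have "I\<^sup>2 \<le> J\<^sup>2"
      by (metis abs_ge_zero abs_le_square_iff abs_of_nonneg order_trans)
    then have "I\<^sup>2 / (h z)\<^sup>2 \<le> J\<^sup>2 / h_min\<^sup>2"
      using H h_min_pos by (intro frac_le) (auto intro: power_mono)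
    have "(deform e z)\<^sup>2 * xW \<alpha> \<tau>m z = (h z * e z - t * poly (\<pi> m) z * I)\<^sup>2 * X / (h z)\<^sup>2"
      unfolding deform_def xW_tau_m[OF z] I_def X_def by simp
    also have "\<dots> \<le> (2 * (h z)\<^sup>2 * (e z)\<^sup>2 + 2 * (t\<^sup>2 * (poly (\<pi> m) z)\<^sup>2 * I\<^sup>2)) * X / (h z)\<^sup>2"
      using X zero_le_power2[of "h z * e z + t * poly (\<pi> m) z * I"]
      by (intro divide_right_mono mult_right_mono) (auto simp: power2_eq_square algebra_simps)
    also have "\<dots> = 2 * (e z)\<^sup>2 * X + 2 * (t\<^sup>2 * (poly (\<pi> m) z)\<^sup>2 * X) * (I\<^sup>2 / (h z)\<^sup>2)"
      using H by (simp add: field_simps)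
    also have "\<dots> \<le> 2 * (e z)\<^sup>2 * X + 2 * (t\<^sup>2 * (poly (\<pi> m) z)\<^sup>2 * X) * (J\<^sup>2 / h_min\<^sup>2)"
      using X \<open>I\<^sup>2 / (h z)\<^sup>2 \<le> J\<^sup>2 / h_min\<^sup>2\<close> by (intro add_left_mono mult_left_mono) auto
    also have "\<dots> = F z * X"
      unfolding F_def by (simp add: field_simps power2_eq_square)
    finally show ?thesis unfolding X_def .
  qed
  have "weighted_sqnorm (xW \<alpha> \<tau>m) (deform e) \<le> (\<integral>\<^sup>+z. indicator {-1..1} z * ennreal (F z * xW \<alpha> \<tau> z) \<partial>lborel)"
    unfolding weighted_sqnorm_def
    by (rule nn_integral_mono) (auto split: split_indicator intro!: ennreal_leI pointwise)
  also have "\<dots> = ennreal (integral {-1..1} (\<lambda>z. F z * W z))"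
    unfolding F_def using ce by (intro nn_integral_xW continuous_intros) auto
  also have "integral {-1..1} (\<lambda>z. F z * W z) = 2 * E + 2 * (t * J / h_min)\<^sup>2 * Q"
  proof -
    have "(\<lambda>z. 2 * ((e z)\<^sup>2 * W z)) integrable_on {-1..1}"
      "(\<lambda>z. 2 * (t * J / h_min)\<^sup>2 * ((poly (\<pi> m) z)\<^sup>2 * W z)) integrable_on {-1..1}"
      using ce continuous_on_W by (auto intro!: integrable_continuous_interval continuous_intros)
    moreover have "(\<lambda>z. F z * W z)
        = (\<lambda>z. 2 * ((e z)\<^sup>2 * W z) + 2 * (t * J / h_min)\<^sup>2 * ((poly (\<pi> m) z)\<^sup>2 * W z))"
      by (auto simp: F_def algebra_simps)
    ultimately show ?thesis unfolding E_def Q_def by (simp only: integral_add integral_mult_right)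
  qed
  finally show ?thesis unfolding J_def .
qed


lemma weighted_sqnorm_xW_le:
  assumes "f \<in> borel_measurable borel"
  shows "weighted_sqnorm (xW \<alpha> \<tau>) f \<le> ennreal (h_max\<^sup>2) * weighted_sqnorm (xW \<alpha> \<tau>m) f"
proof (rule weighted_sqnorm_mono)
  fix z :: real assume z: "z \<in> {-1..1}"
  have "0 < h z" "h z \<le> h_max" using h_pos[OF z] h_bounds(2)[OF z] by auto
  then have "(h z)\<^sup>2 \<le> h_max\<^sup>2" by (intro power_mono) auto
  then have "xW \<alpha> \<tau> z * ((f z)\<^sup>2 * (h z)\<^sup>2) \<le> xW \<alpha> \<tau> z * ((f z)\<^sup>2 * h_max\<^sup>2)"
    by (intro mult_left_mono) (auto simp: xW_nonneg)
  then show "(f z)\<^sup>2 * xW \<alpha> \<tau> z \<le> h_max\<^sup>2 * ((f z)\<^sup>2 * xW \<alpha> \<tau>m z)"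
    using \<open>0 < h z\<close> unfolding xW_tau_m[OF z] by (simp add: field_simps)
qed (use assms in auto)

lemma weighted_sqnorm_xW_tau_m_le:
  assumes "f \<in> borel_measurable borel"
  shows "weighted_sqnorm (xW \<alpha> \<tau>m) f \<le> ennreal (1 / h_min\<^sup>2) * weighted_sqnorm (xW \<alpha> \<tau>) f"
proof (rule weighted_sqnorm_mono)
  fix z :: real assume z: "z \<in> {-1..1}"
  have "h_min\<^sup>2 \<le> (h z)\<^sup>2" using h_bounds(1)[OF z] h_min_pos by (intro power_mono) auto
  then have "(f z)\<^sup>2 * xW \<alpha> \<tau> z / (h z)\<^sup>2 \<le> (f z)\<^sup>2 * xW \<alpha> \<tau> z / h_min\<^sup>2"
    using h_min_pos h_pos[OF z] by (intro divide_left_mono) (auto simp: xW_nonneg)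
  then show "(f z)\<^sup>2 * xW \<alpha> \<tau>m z \<le> 1 / h_min\<^sup>2 * ((f z)\<^sup>2 * xW \<alpha> \<tau> z)"
    unfolding xW_tau_m[OF z] by simp
qed (use assms in auto)

lemma continuous_approximable_by_P:
  assumes comp: "xComplete (xW \<alpha> \<tau>) \<pi>" and g: "continuous_on {-1..1} g" and \<delta>: "0 < \<delta>"
  shows "\<exists>S c. finite S \<and> weighted_sqnorm (xW \<alpha> \<tau>m) (\<lambda>z. g z - (\<Sum>i\<in>S. c i * poly (P i) z)) < ennreal \<delta>"
proof -
  obtain u where cu: "continuous_on {-1..1} u" and u: "\<And>z. z \<in> {-1..1} \<Longrightarrow> deform u z = g z"
    using deform_surjective[OF g] by blast
  define Q where "Q = integral {-1..1} (\<lambda>z. (poly (\<pi> m) z)\<^sup>2 * W z)"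
  have "0 \<le> Q"
    unfolding Q_def using continuous_on_W W_nonneg
    by (intro integral_nonneg integrable_continuous_interval continuous_intros) auto
  define M where "M = t\<^sup>2 * (1 + Q)\<^sup>2 * Q / (2 * h_min\<^sup>2)"
  have "0 \<le> M" unfolding M_def using \<open>0 \<le> Q\<close> by simp
  define \<epsilon> where "\<epsilon> = \<delta> / (2 + M)"
  have \<epsilon>: "0 < \<epsilon>" unfolding \<epsilon>_def using \<open>0 \<le> M\<close> \<delta> by simp
  define v where "v z = (if z \<in> {-1..1} then u z else 0)" for z
  obtain S c where S: "finite S"
    and approx: "weighted_sqnorm (xW \<alpha> \<tau>) (\<lambda>z. v z - (\<Sum>i\<in>S. c i * poly (\<pi> i) z)) < ennreal \<epsilon>"
    using comp xL2_extension_by_zero[OF cu] \<epsilon> unfolding xComplete_def weighted_sqnorm_def v_def by blast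
  define e where "e z = u z - (\<Sum>i\<in>S. c i * poly (\<pi> i) z)" for z
  have ce: "continuous_on {-1..1} e" unfolding e_def[abs_def] using cu by (intro continuous_intros)
  define E where "E = integral {-1..1} (\<lambda>z. (e z)\<^sup>2 * W z)"
  have "0 \<le> E"
    unfolding E_def using continuous_on_W W_nonneg ce
    by (intro integral_nonneg integrable_continuous_interval continuous_intros) auto
  have "ennreal E = weighted_sqnorm (xW \<alpha> \<tau>) (\<lambda>z. v z - (\<Sum>i\<in>S. c i * poly (\<pi> i) z))"
    unfolding E_def weighted_sqnorm_xW_continuous[OF ce, symmetric]
    by (rule weighted_sqnorm_cong) (simp add: v_def e_def)
  with approx have "ennreal E < ennreal \<epsilon>" by simp
  with \<open>0 \<le> E\<close> have E: "0 \<le> E" "E < \<epsilon>" by (auto simp: ennreal_less_iff)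
  define k where "k = sqrt \<epsilon>"
  have k: "0 < k" "k\<^sup>2 = \<epsilon>" unfolding k_def using \<epsilon> by auto
  have "g z - (\<Sum>i\<in>S. c i * poly (P i) z) = deform e z" if z: "z \<in> {-1..1}" for z
  proof -
    have "deform e z = deform u z - deform (\<lambda>x. \<Sum>i\<in>S. c i * poly (\<pi> i) x) z"
      unfolding e_def using cu z by (intro deform_diff continuous_intros)
    then show ?thesis using u[OF z] sum_P_eq_deform[OF S z] by simp
  qed
  then have "weighted_sqnorm (xW \<alpha> \<tau>m) (\<lambda>z. g z - (\<Sum>i\<in>S. c i * poly (P i) z))
      = weighted_sqnorm (xW \<alpha> \<tau>m) (deform e)"
    by (intro weighted_sqnorm_cong) simp
  also have "\<dots> \<le> ennreal (2 * E + 2 * (t * ((E / k + k * Q) / 2) / h_min)\<^sup>2 * Q)"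
    unfolding E_def Q_def by (rule deform_sqnorm_le[OF ce k(1)])
  also have "\<dots> < ennreal \<delta>"
  proof (rule ennreal_lessI[OF \<delta>])
    have "\<epsilon> * (2 + M) = \<delta>" unfolding \<epsilon>_def using \<open>0 \<le> M\<close> by simp
    then show "2 * E + 2 * (t * ((E / k + k * Q) / 2) / h_min)\<^sup>2 * Q < \<delta>"
      using E k \<open>0 \<le> Q\<close> h_min_pos M_def by (intro am_gm_error_bound_lt) auto
  qed
  finally have "weighted_sqnorm (xW \<alpha> \<tau>m) (\<lambda>z. g z - (\<Sum>i\<in>S. c i * poly (P i) z)) < ennreal \<delta>" .
  with S show ?thesis by (intro exI[of _ S] exI[of _ c] conjI)
qed

lemma xComplete_P:
  assumes comp: "xComplete (xW \<alpha> \<tau>) \<pi>"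
  shows "xComplete (xW \<alpha> \<tau>m) P"
  unfolding xComplete_def weighted_sqnorm_def[symmetric]
proof (intro allI impI)
  fix f :: "real \<Rightarrow> real" and \<epsilon> :: real
  assume L2: "xL2 (xW \<alpha> \<tau>m) f" and \<epsilon>: "\<epsilon> > 0"
  have [measurable]: "f \<in> borel_measurable borel" using L2 by (simp add: xL2_def)
  have "weighted_sqnorm (xW \<alpha> \<tau>) f < \<infinity>"
    using weighted_sqnorm_xW_le[of f] L2
    by (auto simp: xL2_def weighted_sqnorm_def[symmetric] ennreal_mult_less_top intro: le_less_trans)
  then have "xL2 (xW \<alpha> \<tau>) f" by (simp add: xL2_def weighted_sqnorm_def)
  moreover have "0 < \<epsilon> * h_min\<^sup>2 / 4" using \<epsilon> h_min_pos by simp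
  ultimately obtain S0 c0 where approx0:
      "weighted_sqnorm (xW \<alpha> \<tau>) (\<lambda>z. f z - (\<Sum>i\<in>S0. c0 i * poly (\<pi> i) z)) < ennreal (\<epsilon> * h_min\<^sup>2 / 4)"
    using comp unfolding xComplete_def weighted_sqnorm_def[symmetric] by blast
  define s0 where "s0 z = (\<Sum>i\<in>S0. c0 i * poly (\<pi> i) z)" for z
  have [measurable]: "s0 \<in> borel_measurable borel" unfolding s0_def[abs_def] by measurable
  have "continuous_on {-1..1} s0" unfolding s0_def[abs_def] by (intro continuous_intros)
  then obtain S c where "finite S" and approx:
      "weighted_sqnorm (xW \<alpha> \<tau>m) (\<lambda>z. s0 z - (\<Sum>i\<in>S. c i * poly (P i) z)) < ennreal (\<epsilon> / 4)"
    using continuous_approximable_by_P[OF comp] \<epsilon> by (meson zero_less_divide_iff zero_less_numeral)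
  obtain a1 where a1: "weighted_sqnorm (xW \<alpha> \<tau>) (\<lambda>z. f z - s0 z) = ennreal a1" "0 \<le> a1"
      "a1 < \<epsilon> * h_min\<^sup>2 / 4"
    using approx0 unfolding s0_def[symmetric] by (rule ennreal_less_ennrealE)
  obtain a2 where a2: "weighted_sqnorm (xW \<alpha> \<tau>m) (\<lambda>z. s0 z - (\<Sum>i\<in>S. c i * poly (P i) z)) = ennreal a2"
      "0 \<le> a2" "a2 < \<epsilon> / 4"
    using approx by (rule ennreal_less_ennrealE)
  define b1 where "b1 = a1 / h_min\<^sup>2"
  have "0 \<le> b1" "b1 < \<epsilon> / 4" unfolding b1_def using a1(2,3) h_min_pos by (auto simp: field_simps)
  have "weighted_sqnorm (xW \<alpha> \<tau>m) (\<lambda>z. f z - s0 z) \<le> ennreal (1 / h_min\<^sup>2) * ennreal a1"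
    unfolding a1(1)[symmetric] by (rule weighted_sqnorm_xW_tau_m_le) measurable
  also have "\<dots> = ennreal b1" unfolding b1_def using a1(2) by (simp add: ennreal_mult'[symmetric])
  finally have b1: "weighted_sqnorm (xW \<alpha> \<tau>m) (\<lambda>z. f z - s0 z) \<le> ennreal b1" .
  have "weighted_sqnorm (xW \<alpha> \<tau>m) (\<lambda>z. f z - (\<Sum>i\<in>S. c i * poly (P i) z))
      \<le> 2 * weighted_sqnorm (xW \<alpha> \<tau>m) (\<lambda>z. f z - s0 z)
        + 2 * weighted_sqnorm (xW \<alpha> \<tau>m) (\<lambda>z. s0 z - (\<Sum>i\<in>S. c i * poly (P i) z))"
    using weighted_sqnorm_add_le[of "\<lambda>z. f z - s0 z" "\<lambda>z. s0 z - (\<Sum>i\<in>S. c i * poly (P i) z)" "xW \<alpha> \<tau>m"]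
    by (simp add: xW_nonneg)
  also have "\<dots> \<le> 2 * ennreal b1 + 2 * ennreal a2"
    using b1 a2(1) by (intro add_mono mult_left_mono) auto
  also have "\<dots> = ennreal (2 * b1 + 2 * a2)"
    using \<open>0 \<le> b1\<close> a2(2) by (simp add: ennreal_mult')
  also have "\<dots> < ennreal \<epsilon>"
    using \<open>b1 < \<epsilon> / 4\<close> a2(3) \<epsilon> by (intro ennreal_lessI) auto
  finally have "weighted_sqnorm (xW \<alpha> \<tau>m) (\<lambda>z. f z - (\<Sum>i\<in>S. c i * poly (P i) z)) < ennreal \<epsilon>" .
  with \<open>finite S\<close> show "\<exists>S c. finite S \<and>
      weighted_sqnorm (xW \<alpha> \<tau>m) (\<lambda>z. f z - (\<Sum>i\<in>S. c i * poly (P i) z)) < ennreal \<epsilon>"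
    by (intro exI[of _ S] exI[of _ c] conjI)
qed

end

theorem mainTheorem14:
  fixes \<alpha> :: real and \<tau> :: "real poly" and \<pi> :: "nat \<Rightarrow> real poly"
    and lam :: "nat \<Rightarrow> real" and m :: nat and t :: real
  assumes half_int: "\<alpha> - 1/2 \<in> \<nat>"
    and eig: "\<And>i. xEigen \<alpha> \<tau> (\<pi> i) (lam i)"
    and lam_distinct: "inj lam"
    and rho_rational: "\<And>i j. \<exists>p q. q \<noteq> 0 \<and>
          (\<forall>z\<in>{-1..1}. poly q z \<noteq> 0 \<longrightarrow> xrho \<alpha> \<tau> \<pi> i j z = poly p z / poly q z)"
    and tau_m_poly: "\<And>k s. \<exists>q. \<forall>z\<in>{-1..1}.
          poly q z = poly \<tau> z * (1 + s * xrho \<alpha> \<tau> \<pi> k k z)"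
    and pi_m_poly: "\<And>k s i. \<exists>q. \<forall>z\<in>{-1..1}.
          poly q z = (1 + s * xrho \<alpha> \<tau> \<pi> k k z) * poly (\<pi> i) z
                     - s * xrho \<alpha> \<tau> \<pi> i k z * poly (\<pi> k) z"
    and fam: "xGegFamily \<alpha> \<tau> \<pi>"
    and pos: "1 + t * xnu \<alpha> \<tau> \<pi> m > 0"
  shows "\<forall>\<tau>m P.
           (\<forall>z\<in>{-1..1}. poly \<tau>m z = poly \<tau> z * (1 + t * xrho \<alpha> \<tau> \<pi> m m z)) \<longrightarrow>
           (\<forall>i. \<forall>z\<in>{-1..1}. poly (P i) z = (1 + t * xrho \<alpha> \<tau> \<pi> m m z) * poly (\<pi> i) z
                                         - t * xrho \<alpha> \<tau> \<pi> i m z * poly (\<pi> m) z) \<longrightarrow>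
           xGegFamily \<alpha> \<tau>m P"
proof (intro allI impI)
  fix \<tau>m P
  assume tau_m: "\<forall>z\<in>{-1..1}. poly \<tau>m z = poly \<tau> z * (1 + t * xrho \<alpha> \<tau> \<pi> m m z)"
    and P_eq: "\<forall>i. \<forall>z\<in>{-1..1}. poly (P i) z = (1 + t * xrho \<alpha> \<tau> \<pi> m m z) * poly (\<pi> i) z
                                         - t * xrho \<alpha> \<tau> \<pi> i m z * poly (\<pi> m) z"
  obtain n :: nat where n: "\<alpha> = real n + 1/2" using half_int by (auto elim!: Nats_cases simp: algebra_simps)
  have tau_nonzero: "\<forall>z\<in>{-1..1}. poly \<tau> z \<noteq> 0" and op: "xGegOperatorEigenfamily \<alpha> \<tau> \<pi>"
    and comp: "xComplete (xW \<alpha> \<tau>) \<pi>"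
    using fam unfolding xGegFamily_def by auto
  interpret exceptional_gegenbauer \<alpha> \<tau> \<pi> lam n
    using n eig lam_distinct tau_nonzero by unfold_locales
  interpret christoffel_deformation \<alpha> \<tau> \<pi> lam n m t \<tau>m P
    using pos tau_m P_eq by unfold_locales (simp_all add: xrho_eq_rho xnu_eq_rho)
  have "finite (UNIV - range (\<lambda>i. degree (\<pi> i)))"
    using op unfolding xGegOperatorEigenfamily_def by blast
  then show "xGegFamily \<alpha> \<tau>m P"
    unfolding xGegFamily_def xGegOperatorEigenfamily_def
    using tau_m_nonzero xEigen_P inj_degree_P cofinite_degree_P xComplete_P[OF comp] by blast
qed

end
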